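(* Consider a sequence (indexed by $n\to\infty$) of $(n,L_1,L_2,2^{nR_1},2^{nR_2})$ dual-source SPIR protocols satisfying the achievability conditions, i.e., witnessing that $(R_1,R_2)$ is achievable. Then $$H(F_{1,\mathcal{L}_1\setminus\{Z_1\}}\mid X_1^n\mathbf{A}Z_1Z_2)=o(n)\quad\text{and}\quad H(F_{2,\mathcal{L}_2\setminus\{Z_2\}}\mid X_2^n\mathbf{A}Z_1Z_2)=o(n),$$ where $o(n)$ denotes a quantity $g(n)$ with $g(n)/n\to0$.
   Context: All logarithms are base 2; $\oplus$ is bitwise addition modulo 2. The binary adder multiple-access channel (MAC) has inputs $X_1,X_2\in\{0,1\}$ and output $Y=X_1+X_2\in\{0,1,2\}$ (ordinary integer addition). For $i\in\{1,2\}$ let $\mathcal{L}_i=\{1,\dots,L_i\}$. An $(n,L_1,L_2,2^{nR_1},2^{nR_2})$ dual-source SPIR protocol involves a client and two servers, together with the following mutually independent random variables: files $F_{i,l}$ ($i\in\{1,2\}$, $l\in\mathcal{L}_i$), each uniform on $\{0,1\}^{nR_i}$, where the files $(F_{i,l})_{l\in\mathcal{L}_i}$ are stored at Server $i$ and $F_{i,\mathcal{S}}$ denotes $(F_{i,l})_{l\in\mathcal{S}}$; local randomness $U_0$ (client), $U_1$ (Server 1), $U_2$ (Server 2); and file selections $Z_1,Z_2$ uniform on $\mathcal{L}_1,\mathcal{L}_2$ (the client wants $F_{1,Z_1}$ and $F_{2,Z_2}$). The protocol operates as follows. For $t=1,\dots,n$, Server $i$ sends $(X_i)_t$, a function of $(F_{i,\mathcal{L}_i},U_i)$,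 over the MAC, and the client observes $Y_t=(X_1)_t+(X_2)_t$. Write $X_i^n=((X_i)_t)_{t=1}^n$ and $Y^n=(Y_t)_{t=1}^n$. Then, for rounds $j=1,\dots,r$, Server $i$ publicly sends $M_i(j)$, a function of $(F_{i,\mathcal{L}_i},U_i,(M_{0,i}(m))_{m<j})$, and the client publicly sends $M_{0,i}(j)$, a function of $(Z_i,U_0,Y^n,(M_i(m))_{m\le j})$, for $i\in\{1,2\}$. Set $\mathbf{A}_i=(M_{0,i}(j),M_i(j))_{j=1}^r$ and $\mathbf{A}=(\mathbf{A}_1,\mathbf{A}_2)$. Finally, the client forms an estimate $\hat F_{i,Z_i}$ of $F_{i,Z_i}$ as a function of $(Y^n,U_0,\mathbf{A}_i,Z_i)$. A rate pair $(R_1,R_2)$ is achievable if there exists a sequence (indexed by $n\to\infty$) of such protocols satisfying all of the following as $n\to\infty$ (the achievability conditions): - $\mathbb{P}[(\hat F_{1,Z_1},\hat F_{2,Z_2})\ne(F_{1,Z_1},F_{2,Z_2})]\to0$; - $I(F_{1,\mathcal{L}_1}X_1^nU_1\mathbf{A};Z_1Z_2)\to0$; - $I(F_{2,\mathcal{L}_2}X_2^nU_2\mathbf{A};Z_1Z_2)\to0$; - $I(F_{1,\mathcal{L}_1}X_1^nU_1\mathbf{A};F_{2,\mathcal{L}_2})\to0$; - $I(F_{2,\mathcal{L}_2}X_2^nU_2\mathbf{A};F_{1,\mathcal{L}_1})\to0$; - $I(Z_1Z_2Y^nU_0\mathbf{A};F_{1,\mathcal{L}_1\setminus\{Z_1\}}F_{2,\mathcal{L}_2\setminus\{Z_2\}})\to0$.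 *)

theory Defs
  imports "HOL-Probability.Probability"
begin

definition ent :: "'w pmf \<Rightarrow> ('w \<Rightarrow> 'a) \<Rightarrow> real" where
  "ent M X = (\<Sum>x \<in> X ` set_pmf M.
      - measure_pmf.prob M (X -` {x}) * log 2 (measure_pmf.prob M (X -` {x})))"

definition cond_ent :: "'w pmf \<Rightarrow> ('w \<Rightarrow> 'a) \<Rightarrow> ('w \<Rightarrow> 'b) \<Rightarrow> real" where
  "cond_ent M X Y = ent M (\<lambda>w. (X w, Y w)) - ent M Y"

definition mut_inf :: "'w pmf \<Rightarrow> ('w \<Rightarrow> 'a) \<Rightarrow> ('w \<Rightarrow> 'b) \<Rightarrow> real" where
  "mut_inf M X Y = ent M X + ent M Y - ent M (\<lambda>w. (X w, Y w))"

type_synonym files = "nat \<Rightarrow> bool list"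

text \<open>Realisation of all primitive random variables.\<close>
record spir_sample =
  sF1 :: files
  sF2 :: files
  sU0 :: nat
  sU1 :: nat
  sU2 :: nat
  sZ1 :: nat
  sZ2 :: nat

text \<open>A protocol of block length n (the block length is supplied separately).
  Local randomness is modelled as an arbitrary finitely supported distribution on nat;
  messages are natural numbers.
  enc_i files u t : channel input of server i at time t (t = 0..n-1).
  srv_i j files u prev : message M_i(j) from the files, U_i and (M_{0,i}(m))_{m<j}.
  cli_i j z u0 y prev : message M_{0,i}(j) from Z_i, U_0, Y^n and (M_i(m))_{m<=j}.
  dec_i y u0 A_i z : estimate of F_{i,Z_i}.\<close>
record spir_protocol =
  len1 :: nat
  len2 :: nat
  pU0 :: "nat pmf"
  pU1 :: "nat pmf"
  pU2 :: "nat pmf"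
  enc1 :: "files \<Rightarrow> nat \<Rightarrow> nat \<Rightarrow> bool"
  enc2 :: "files \<Rightarrow> nat \<Rightarrow> nat \<Rightarrow> bool"
  rounds :: nat
  srv1 :: "nat \<Rightarrow> files \<Rightarrow> nat \<Rightarrow> nat list \<Rightarrow> nat"
  srv2 :: "nat \<Rightarrow> files \<Rightarrow> nat \<Rightarrow> nat list \<Rightarrow> nat"
  cli1 :: "nat \<Rightarrow> nat \<Rightarrow> nat \<Rightarrow> nat list \<Rightarrow> nat list \<Rightarrow> nat"
  cli2 :: "nat \<Rightarrow> nat \<Rightarrow> nat \<Rightarrow> nat list \<Rightarrow> nat list \<Rightarrow> nat"
  dec1 :: "nat list \<Rightarrow> nat \<Rightarrow> (nat \<times> nat) list \<Rightarrow> nat \<Rightarrow> bool list"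
  dec2 :: "nat list \<Rightarrow> nat \<Rightarrow> (nat \<times> nat) list \<Rightarrow> nat \<Rightarrow> bool list"

definition valid_protocol :: "spir_protocol \<Rightarrow> bool" where
  "valid_protocol P \<longleftrightarrow> finite (set_pmf (pU0 P)) \<and> finite (set_pmf (pU1 P))
      \<and> finite (set_pmf (pU2 P))"

definition file_set :: "nat \<Rightarrow> nat \<Rightarrow> files set" where
  "file_set L k = PiE {1..L} (\<lambda>_. {xs. length xs = k})"

definition sample_pmf :: "nat \<Rightarrow> nat \<Rightarrow> spir_protocol \<Rightarrow> spir_sample pmf" where
  "sample_pmf L1 L2 P =
     bind_pmf (pmf_of_set (file_set L1 (len1 P))) (\<lambda>f1.
     bind_pmf (pmf_of_set (file_set L2 (len2 P))) (\<lambda>f2.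
     bind_pmf (pU0 P) (\<lambda>u0.
     bind_pmf (pU1 P) (\<lambda>u1.
     bind_pmf (pU2 P) (\<lambda>u2.
     bind_pmf (pmf_of_set {1..L1}) (\<lambda>z1.
     bind_pmf (pmf_of_set {1..L2}) (\<lambda>z2.
     return_pmf \<lparr>sF1 = f1, sF2 = f2, sU0 = u0, sU1 = u1, sU2 = u2, sZ1 = z1, sZ2 = z2\<rparr>)))))))"

definition Xn1 :: "nat \<Rightarrow> spir_protocol \<Rightarrow> spir_sample \<Rightarrow> bool list" where
  "Xn1 n P w = map (enc1 P (sF1 w) (sU1 w)) [0..<n]"

definition Xn2 :: "nat \<Rightarrow> spir_protocol \<Rightarrow> spir_sample \<Rightarrow> bool list" where
  "Xn2 n P w = map (enc2 P (sF2 w) (sU2 w)) [0..<n]"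

definition Yn :: "nat \<Rightarrow> spir_protocol \<Rightarrow> spir_sample \<Rightarrow> nat list" where
  "Yn n P w = map2 (\<lambda>a b. of_bool a + of_bool b) (Xn1 n P w) (Xn2 n P w)"

text \<open>Rounds j = 1..r: server message s = M_i(j) from the previous client messages,
  then client message c = M_{0,i}(j) from the server messages up to round j.
  The transcript is the list of pairs (M_{0,i}(j), M_i(j)).\<close>
definition run_rounds ::
  "nat \<Rightarrow> (nat \<Rightarrow> nat list \<Rightarrow> nat) \<Rightarrow> (nat \<Rightarrow> nat list \<Rightarrow> nat) \<Rightarrow> (nat \<times> nat) list" where
  "run_rounds r srv cli =
     foldl (\<lambda>ps j. let s = srv j (map fst ps); c = cli j (map snd ps @ [s]) in ps @ [(c, s)])
       [] [1..<Suc r]"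

definition A1 :: "nat \<Rightarrow> spir_protocol \<Rightarrow> spir_sample \<Rightarrow> (nat \<times> nat) list" where
  "A1 n P w = run_rounds (rounds P) (\<lambda>j. srv1 P j (sF1 w) (sU1 w))
                (\<lambda>j. cli1 P j (sZ1 w) (sU0 w) (Yn n P w))"

definition A2 :: "nat \<Rightarrow> spir_protocol \<Rightarrow> spir_sample \<Rightarrow> (nat \<times> nat) list" where
  "A2 n P w = run_rounds (rounds P) (\<lambda>j. srv2 P j (sF2 w) (sU2 w))
                (\<lambda>j. cli2 P j (sZ2 w) (sU0 w) (Yn n P w))"

definition Aall :: "nat \<Rightarrow> spir_protocol \<Rightarrow> spir_sample \<Rightarrow> (nat \<times> nat) list \<times> (nat \<times> nat) list" where
  "Aall n P w = (A1 n P w, A2 n P w)"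

definition other_files :: "nat \<Rightarrow> files \<Rightarrow> nat \<Rightarrow> bool list list" where
  "other_files L f z = map f (filter (\<lambda>l. l \<noteq> z) [1..<Suc L])"

definition all_files :: "nat \<Rightarrow> files \<Rightarrow> bool list list" where
  "all_files L f = map f [1..<Suc L]"

definition achieves :: "nat \<Rightarrow> nat \<Rightarrow> real \<Rightarrow> real \<Rightarrow> (nat \<Rightarrow> spir_protocol) \<Rightarrow> bool" where
  "achieves L1 L2 R1 R2 P \<longleftrightarrow>
     (\<forall>n. valid_protocol (P n)
          \<and> len1 (P n) = nat \<lfloor>real n * R1\<rfloor> \<and> len2 (P n) = nat \<lfloor>real n * R2\<rfloor>) \<and>
     (\<lambda>n. measure_pmf.prob (sample_pmf L1 L2 (P n))
        {w. (dec1 (P n) (Yn n (P n) w) (sU0 w) (A1 n (P n) w) (sZ1 w),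
             dec2 (P n) (Yn n (P n) w) (sU0 w) (A2 n (P n) w) (sZ2 w))
            \<noteq> (sF1 w (sZ1 w), sF2 w (sZ2 w))}) \<longlonglongrightarrow> 0 \<and>
     (\<lambda>n. mut_inf (sample_pmf L1 L2 (P n))
        (\<lambda>w. (all_files L1 (sF1 w), Xn1 n (P n) w, sU1 w, Aall n (P n) w))
        (\<lambda>w. (sZ1 w, sZ2 w))) \<longlonglongrightarrow> 0 \<and>
     (\<lambda>n. mut_inf (sample_pmf L1 L2 (P n))
        (\<lambda>w. (all_files L2 (sF2 w), Xn2 n (P n) w, sU2 w, Aall n (P n) w))
        (\<lambda>w. (sZ1 w, sZ2 w))) \<longlonglongrightarrow> 0 \<and>
     (\<lambda>n. mut_inf (sample_pmf L1 L2 (P n))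
        (\<lambda>w. (all_files L1 (sF1 w), Xn1 n (P n) w, sU1 w, Aall n (P n) w))
        (\<lambda>w. all_files L2 (sF2 w))) \<longlonglongrightarrow> 0 \<and>
     (\<lambda>n. mut_inf (sample_pmf L1 L2 (P n))
        (\<lambda>w. (all_files L2 (sF2 w), Xn2 n (P n) w, sU2 w, Aall n (P n) w))
        (\<lambda>w. all_files L1 (sF1 w))) \<longlonglongrightarrow> 0 \<and>
     (\<lambda>n. mut_inf (sample_pmf L1 L2 (P n))
        (\<lambda>w. (sZ1 w, sZ2 w, Yn n (P n) w, sU0 w, Aall n (P n) w))
        (\<lambda>w. (other_files L1 (sF1 w) (sZ1 w), other_files L2 (sF2 w) (sZ2 w)))) \<longlonglongrightarrow> 0"

end

theory Submission
  imports Defs "HOL-Real_Asymp.Real_Asymp"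
begin

(* For a server i and a file index l, let the server estimate file l from its view
   (X_i^n, A) by the MAP rule.  The client's remaining information (the other server's channel
   input, U_0 and Z_i) is conditionally independent of the files given this view, so on the event
   Z_i = l the MAP rule errs no more often than the client's decoder, i.e. with vanishing
   probability.  Whether the MAP rule errs is a function of the server's knowledge, which is
   almost independent of (Z_1, Z_2); as P(Z_i = l) = 1/L_i > 0, the MAP rule must then err with
   vanishing probability unconditionally.  Given the view and (Z_1, Z_2), the other files are
   determined by the MAP estimates together with the files on which they err, so by Fano's
   inequality the conditional entropy is at most the sum over l of 1 + P(error on l) n R_i,
   which is o(n). *)

definition supp_measure :: "'w pmf \<Rightarrow> 'w measure" where
  "supp_measure M = restrict_space (measure_pmf M) (set_pmf M)"

lemma space_supp_measure [simp]: "space (supp_measure M) = set_pmf M"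
  by (simp add: supp_measure_def space_restrict_space)

lemma sets_supp_measure [simp]: "sets (supp_measure M) = Pow (set_pmf M)"
  by (auto simp: supp_measure_def sets_restrict_space)

lemma measure_supp_measure: "measure (supp_measure M) (A \<inter> set_pmf M) = measure_pmf.prob M A"
  unfolding supp_measure_def by (subst measure_restrict_space) (auto simp: measure_Int_set_pmf)

lemma information_space_supp_measure: "information_space (supp_measure M) 2"
proof -
  have "prob_space (supp_measure M)" unfolding supp_measure_def
    by (rule prob_space_restrict_space) (auto simp: emeasure_Int_set_pmf[of M UNIV, simplified])
  then show ?thesis unfolding information_space_def information_space_axioms_def by simp
qed

lemma simple_function_supp_measure:
  "finite (set_pmf M) \<Longrightarrow> simple_function (supp_measure M) X"
  by (auto simp: simple_function_def)

lemma simple_distributed_supp_measure: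
  assumes fin: "finite (set_pmf M)"
  shows "simple_distributed (supp_measure M) X (\<lambda>x. measure_pmf.prob M (X -` {x}))"
proof -
  interpret information_space "supp_measure M" 2 by (rule information_space_supp_measure)
  show ?thesis
    by (rule simple_distributedI[OF simple_function_supp_measure[OF fin]])
      (auto simp: measure_supp_measure)
qed

lemma prob_eq_sum_pmf:
  "finite (set_pmf M) \<Longrightarrow> measure_pmf.prob M A = (\<Sum>w\<in>A \<inter> set_pmf M. pmf M w)"
  by (metis measure_Int_set_pmf measure_measure_pmf_finite finite_Int)

lemma sum_values_eq_sum_pmf:
  assumes fin: "finite (set_pmf M)"
  shows "(\<Sum>x\<in>X ` set_pmf M. measure_pmf.prob M (X -` {x}) * \<phi> x)
    = (\<Sum>w\<in>set_pmf M. pmf M w * \<phi> (X w))"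
proof -
  have "(\<Sum>w\<in>set_pmf M. pmf M w * \<phi> (X w))
      = (\<Sum>x\<in>X ` set_pmf M. \<Sum>w\<in>{w\<in>set_pmf M. X w = x}. pmf M w * \<phi> (X w))"
    using fin by (rule sum.image_gen)
  also have "\<dots> = (\<Sum>x\<in>X ` set_pmf M. measure_pmf.prob M (X -` {x}) * \<phi> x)"
  proof (rule sum.cong[OF refl])
    fix x
    have "{w\<in>set_pmf M. X w = x} = X -` {x} \<inter> set_pmf M" by auto
    then show "(\<Sum>w\<in>{w\<in>set_pmf M. X w = x}. pmf M w * \<phi> (X w)) = measure_pmf.prob M (X -` {x}) * \<phi> x"
      by (simp add: sum_distrib_right prob_eq_sum_pmf[OF fin])
  qed
  finally show ?thesis by simp
qed

definition point_prob :: "'w pmf \<Rightarrow> ('w \<Rightarrow> 'a) \<Rightarrow> 'w \<Rightarrow> real" where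
  "point_prob M X w = measure_pmf.prob M (X -` {X w})"

lemma point_prob_pos: "w \<in> set_pmf M \<Longrightarrow> 0 < point_prob M X w"
proof -
  assume w: "w \<in> set_pmf M"
  have "pmf M w \<le> point_prob M X w" unfolding point_prob_def measure_pmf_single[symmetric]
    by (rule measure_pmf.finite_measure_mono) auto
  then show ?thesis using pmf_positive[OF w] by linarith
qed

lemma ent_eq_neg_sum_pmf:
  "finite (set_pmf M) \<Longrightarrow> ent M X = - (\<Sum>w\<in>set_pmf M. pmf M w * log 2 (point_prob M X w))"
  unfolding ent_def point_prob_def
  by (subst sum_values_eq_sum_pmf[symmetric]) (simp_all add: sum_negf)

lemma ent_const: "finite (set_pmf M) \<Longrightarrow> ent M (\<lambda>w. c) = 0"
  by (simp add: ent_eq_neg_sum_pmf point_prob_def)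

lemma ent_cong:
  assumes fin: "finite (set_pmf M)"
    and eq: "\<And>w w'. w \<in> set_pmf M \<Longrightarrow> w' \<in> set_pmf M \<Longrightarrow> X w = X w' \<longleftrightarrow> Y w = Y w'"
  shows "ent M X = ent M Y"
proof -
  have "point_prob M X w = point_prob M Y w" if w: "w \<in> set_pmf M" for w
  proof -
    have "X -` {X w} \<inter> set_pmf M = Y -` {Y w} \<inter> set_pmf M"
      using eq[OF w] by (auto simp: eq_commute)
    then show ?thesis unfolding point_prob_def by (metis measure_Int_set_pmf)
  qed
  then show ?thesis by (simp add: ent_eq_neg_sum_pmf[OF fin])
qed

text \<open>The one genuinely information-theoretic input, taken from the nonnegativity of
  conditional mutual information in HOL-Probability; the other entropy inequalities below follow
  from it by choosing the three random variables suitably.\<close>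

lemma ent_strong_subadditivity:
  assumes fin: "finite (set_pmf M)"
  shows "ent M (\<lambda>w. (X w, Y w, Z w)) + ent M Z \<le> ent M (\<lambda>w. (X w, Z w)) + ent M (\<lambda>w. (Y w, Z w))"
proof -
  interpret I: information_space "supp_measure M" 2 by (rule information_space_supp_measure)
  note sf = simple_function_supp_measure[OF fin] and sd = simple_distributed_supp_measure[OF fin]
  let ?P = "\<lambda>T t. measure_pmf.prob M (T -` {t})"
  let ?T = "\<lambda>w. (X w, Y w, Z w)" and ?XZ = "\<lambda>w. (X w, Z w)" and ?YZ = "\<lambda>w. (Y w, Z w)"
  have "0 \<le> (\<Sum>(x, y, z)\<in>?T ` space (supp_measure M). ?P ?T (x, y, z) * log 2 (?P ?T (x, y, z) /
      (?P ?XZ (x, z) * (?P ?YZ (y, z) / ?P Z z))))"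
    using I.conditional_mutual_information_nonneg[OF sf sf sf, of X Y Z]
    by (subst (asm) I.conditional_mutual_information_eq[OF sd sd sd sd])
  also have "\<dots> = (\<Sum>t\<in>?T ` set_pmf M. ?P ?T t * log 2 (?P ?T t /
      (?P ?XZ (fst t, snd (snd t)) * (?P ?YZ (snd t) / ?P Z (snd (snd t))))))"
    by (auto simp: split_beta intro!: sum.cong)
  also have "\<dots> = (\<Sum>w\<in>set_pmf M. pmf M w * log 2 (point_prob M ?T w /
      (point_prob M ?XZ w * (point_prob M ?YZ w / point_prob M Z w))))"
    by (subst sum_values_eq_sum_pmf[OF fin]) (simp add: point_prob_def)
  also have "\<dots> = (\<Sum>w\<in>set_pmf M. pmf M w * log 2 (point_prob M ?T w)
      - pmf M w * log 2 (point_prob M ?XZ w) - pmf M w * log 2 (point_prob M ?YZ w)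
      + pmf M w * log 2 (point_prob M Z w))"
  proof (rule sum.cong[OF refl])
    fix w assume w: "w \<in> set_pmf M"
    note p = point_prob_pos[OF w]
    show "pmf M w * log 2 (point_prob M ?T w / (point_prob M ?XZ w * (point_prob M ?YZ w / point_prob M Z w)))
      = pmf M w * log 2 (point_prob M ?T w) - pmf M w * log 2 (point_prob M ?XZ w)
        - pmf M w * log 2 (point_prob M ?YZ w) + pmf M w * log 2 (point_prob M Z w)"
      using p[of ?T] p[of ?XZ] p[of ?YZ] p[of Z] by (simp add: log_divide log_mult algebra_simps)
  qed
  also have "\<dots> = - ent M ?T + ent M ?XZ + ent M ?YZ - ent M Z"
    by (simp add: ent_eq_neg_sum_pmf[OF fin] sum.distrib sum_subtractf)
  finally show ?thesis by simp
qed

lemma ent_pair_le: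
  assumes fin: "finite (set_pmf M)"
  shows "ent M (\<lambda>w. (X w, Y w)) \<le> ent M X + ent M Y"
proof -
  have "ent M (\<lambda>w. (X w, Y w, ())) + ent M (\<lambda>w. ()) \<le> ent M (\<lambda>w. (X w, ())) + ent M (\<lambda>w. (Y w, ()))"
    by (rule ent_strong_subadditivity[OF fin])
  moreover have "ent M (\<lambda>w. (X w, Y w, ())) = ent M (\<lambda>w. (X w, Y w))" by (rule ent_cong[OF fin]) auto
  moreover have "ent M (\<lambda>w. (X w, ())) = ent M X" by (rule ent_cong[OF fin]) auto
  moreover have "ent M (\<lambda>w. (Y w, ())) = ent M Y" by (rule ent_cong[OF fin]) auto
  ultimately show ?thesis using ent_const[OF fin, of "()"] by simp
qed

lemma ent_fun_le:
  assumes fin: "finite (set_pmf M)"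
  shows "ent M (\<lambda>w. f (X w)) \<le> ent M X"
proof -
  have "ent M (\<lambda>w. (X w, X w, f (X w))) + ent M (\<lambda>w. f (X w))
      \<le> ent M (\<lambda>w. (X w, f (X w))) + ent M (\<lambda>w. (X w, f (X w)))"
    by (rule ent_strong_subadditivity[OF fin])
  moreover have "ent M (\<lambda>w. (X w, X w, f (X w))) = ent M X" by (rule ent_cong[OF fin]) auto
  moreover have "ent M (\<lambda>w. (X w, f (X w))) = ent M X" by (rule ent_cong[OF fin]) auto
  ultimately show ?thesis by simp
qed

lemma ent_list_le_sum:
  assumes fin: "finite (set_pmf M)"
  shows "ent M (\<lambda>w. map (\<lambda>l. X l w) ls) \<le> (\<Sum>l\<leftarrow>ls. ent M (X l))"
proof (induction ls)
  case Nil
  then show ?case by (simp add: ent_const[OF fin])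
next
  case (Cons l ls)
  have "ent M (\<lambda>w. map (\<lambda>l. X l w) (l # ls)) = ent M (\<lambda>w. (X l w, map (\<lambda>l. X l w) ls))"
    by (rule ent_cong[OF fin]) auto
  also have "\<dots> \<le> ent M (X l) + ent M (\<lambda>w. map (\<lambda>l. X l w) ls)" by (rule ent_pair_le[OF fin])
  finally show ?case using Cons by simp
qed

lemma cond_ent_nonneg:
  "finite (set_pmf M) \<Longrightarrow> 0 \<le> cond_ent M X Y"
  using ent_fun_le[of M snd "\<lambda>w. (X w, Y w)"] by (simp add: cond_ent_def)

lemma cond_ent_le_ent_if_determined:
  assumes fin: "finite (set_pmf M)" and X: "\<And>w. X w = \<phi> (Y w) (K w)"
  shows "cond_ent M X Y \<le> ent M K"
proof -
  have "ent M (\<lambda>w. (X w, Y w)) = ent M (\<lambda>w. (\<lambda>(k, y). (\<phi> y k, y)) (K w, Y w))"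
    by (simp add: X)
  also have "\<dots> \<le> ent M (\<lambda>w. (K w, Y w))" by (rule ent_fun_le[OF fin])
  finally show ?thesis using ent_pair_le[OF fin, of K Y] by (simp add: cond_ent_def)
qed

lemma mut_inf_commute:
  assumes fin: "finite (set_pmf M)"
  shows "mut_inf M X Y = mut_inf M Y X"
proof -
  have "ent M (\<lambda>w. (X w, Y w)) = ent M (\<lambda>w. (Y w, X w))" by (rule ent_cong[OF fin]) auto
  then show ?thesis by (simp add: mut_inf_def)
qed

lemma mut_inf_fun_left_le:
  assumes fin: "finite (set_pmf M)"
  shows "mut_inf M (\<lambda>w. f (X w)) Y \<le> mut_inf M X Y"
proof -
  have "ent M (\<lambda>w. (X w, Y w, f (X w))) + ent M (\<lambda>w. f (X w))
      \<le> ent M (\<lambda>w. (X w, f (X w))) + ent M (\<lambda>w. (Y w, f (X w)))"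
    by (rule ent_strong_subadditivity[OF fin])
  moreover have "ent M (\<lambda>w. (X w, Y w, f (X w))) = ent M (\<lambda>w. (X w, Y w))" by (rule ent_cong[OF fin]) auto
  moreover have "ent M (\<lambda>w. (X w, f (X w))) = ent M X" by (rule ent_cong[OF fin]) auto
  moreover have "ent M (\<lambda>w. (Y w, f (X w))) = ent M (\<lambda>w. (f (X w), Y w))" by (rule ent_cong[OF fin]) auto
  ultimately show ?thesis by (simp add: mut_inf_def)
qed

lemma mut_inf_fun_le:
  assumes fin: "finite (set_pmf M)"
  shows "mut_inf M (\<lambda>w. f (X w)) (\<lambda>w. g (Y w)) \<le> mut_inf M X Y"
proof -
  have "mut_inf M (\<lambda>w. f (X w)) (\<lambda>w. g (Y w)) = mut_inf M (\<lambda>w. g (Y w)) (\<lambda>w. f (X w))"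
    by (rule mut_inf_commute[OF fin])
  also have "\<dots> \<le> mut_inf M Y (\<lambda>w. f (X w))" by (rule mut_inf_fun_left_le[OF fin])
  also have "\<dots> = mut_inf M (\<lambda>w. f (X w)) Y" by (rule mut_inf_commute[OF fin])
  also have "\<dots> \<le> mut_inf M X Y" by (rule mut_inf_fun_left_le[OF fin])
  finally show ?thesis .
qed

lemma prob_vimage_outside:
  assumes "x \<notin> X ` set_pmf M"
  shows "measure_pmf.prob M (X -` {x}) = 0"
proof -
  have "X -` {x} \<inter> set_pmf M = {}" using assms by auto
  then show ?thesis by (metis measure_Int_set_pmf measure_empty)
qed

lemma ent_eq_sum_over:
  assumes "finite A" "X ` set_pmf M \<subseteq> A"
  shows "ent M X = - (\<Sum>x\<in>A. measure_pmf.prob M (X -` {x}) * log 2 (measure_pmf.prob M (X -` {x})))"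
proof -
  have "(\<Sum>x\<in>X ` set_pmf M. measure_pmf.prob M (X -` {x}) * log 2 (measure_pmf.prob M (X -` {x})))
      = (\<Sum>x\<in>A. measure_pmf.prob M (X -` {x}) * log 2 (measure_pmf.prob M (X -` {x})))"
    by (rule sum.mono_neutral_left) (use assms prob_vimage_outside in auto)
  then show ?thesis unfolding ent_def by (simp add: sum_negf)
qed

lemma sum_prob_vimage_eq_1:
  assumes fin: "finite (set_pmf M)" and "finite A" "X ` set_pmf M \<subseteq> A"
  shows "(\<Sum>x\<in>A. measure_pmf.prob M (X -` {x})) = 1"
proof -
  have "(\<Sum>x\<in>A. measure_pmf.prob M (X -` {x})) = (\<Sum>x\<in>X ` set_pmf M. measure_pmf.prob M (X -` {x}))"
    by (rule sum.mono_neutral_right) (use assms prob_vimage_outside in auto)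
  also have "\<dots> = (\<Sum>w\<in>set_pmf M. pmf M w * 1)"
    using sum_values_eq_sum_pmf[OF fin, of X "\<lambda>_. 1"] by simp
  also have "\<dots> = 1"
    using fin by (simp add: sum_pmf_eq_1)
  finally show ?thesis .
qed

lemma prob_split_conj:
  "measure_pmf.prob M {w. P w} = measure_pmf.prob M {w. P w \<and> Q w} + measure_pmf.prob M {w. P w \<and> \<not> Q w}"
proof -
  have "{w. P w} = {w. P w \<and> Q w} \<union> {w. P w \<and> \<not> Q w}" by auto
  then show ?thesis by (metis (no_types, lifting) measure_pmf.finite_measure_Union sets_measure_pmf UNIV_I
      disjoint_iff mem_Collect_eq)
qed

text \<open>A single term of a Kullback--Leibler divergence, bounded via \<open>ln t \<le> t - 1\<close>;
  summed over all terms it gives Gibbs' inequality.\<close>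

lemma divergence_term_ge:
  fixes a b :: real
  assumes "0 \<le> a" "0 \<le> b" "0 < a \<Longrightarrow> 0 < b"
  shows "(a - b) / ln 2 \<le> a * (log 2 a - log 2 b)"
proof (cases "a = 0")
  case True then show ?thesis using assms by (simp add: divide_nonpos_pos)
next
  case False
  then have a: "0 < a" and b: "0 < b" using assms by simp_all
  have "ln (b / a) \<le> b / a - 1" using a b by (intro ln_le_minus_one) simp
  then have "a - b \<le> a * (ln a - ln b)" using a b by (simp add: ln_div field_simps)
  then have "(a - b) / ln 2 \<le> a * (ln a - ln b) / ln 2" by (simp add: divide_right_mono)
  also have "\<dots> = a * (log 2 a - log 2 b)" by (simp add: log_def diff_divide_distrib[symmetric])
  finally show ?thesis .
qed

lemma neg_sum_mult_log_le_log_card: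
  fixes p :: "'i \<Rightarrow> real"
  assumes fin: "finite I" and nn: "\<And>i. i \<in> I \<Longrightarrow> 0 \<le> p i"
  shows "- (\<Sum>i\<in>I. p i * log 2 (p i)) \<le> sum p I * log 2 (card I) - sum p I * log 2 (sum p I)"
proof (cases "sum p I = 0")
  case True
  then have "\<forall>i\<in>I. p i = 0" using sum_nonneg_eq_0_iff[OF fin] nn by blast
  then show ?thesis by simp
next
  case False
  let ?P = "sum p I"
  have P: "0 < ?P" using False sum_nonneg[of I p] nn by force
  then have c: "0 < card I" using fin by (auto simp: card_gt_0_iff)
  let ?b = "?P / card I"
  have b: "0 < ?b" using P c by simp
  have "0 = (\<Sum>i\<in>I. (p i - ?b) / ln 2)"
    using c by (simp add: sum_divide_distrib[symmetric] sum_subtractf)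
  also have "\<dots> \<le> (\<Sum>i\<in>I. p i * (log 2 (p i) - log 2 ?b))"
    by (rule sum_mono, rule divergence_term_ge) (use nn b in auto)
  also have "\<dots> = (\<Sum>i\<in>I. p i * log 2 (p i)) - ?P * (log 2 ?P - log 2 (card I))"
    using P c by (simp add: algebra_simps sum_subtractf sum.distrib sum_distrib_right log_divide)
  finally show ?thesis by (simp add: algebra_simps)
qed

lemma binary_entropy_le_1:
  fixes m :: real
  assumes "0 \<le> m" "m \<le> 1"
  shows "- (m * log 2 m) - (1 - m) * log 2 (1 - m) \<le> 1"
proof -
  let ?p = "\<lambda>b::bool. if b then m else 1 - m"
  have "- (\<Sum>b\<in>UNIV. ?p b * log 2 (?p b))
      \<le> sum ?p UNIV * log 2 (card (UNIV::bool set)) - sum ?p UNIV * log 2 (sum ?p UNIV)"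
    by (rule neg_sum_mult_log_le_log_card) (use assms in auto)
  then show ?thesis by (simp add: UNIV_bool)
qed

lemma ent_option_le:
  assumes fin: "finite (set_pmf M)" and Fs: "finite Fs" "\<And>w. w \<in> set_pmf M \<Longrightarrow> F w \<in> Fs"
    and card: "card Fs \<le> 2 ^ k"
  shows "ent M (\<lambda>w. if E w then Some (F w) else None) \<le> 1 + measure_pmf.prob M {w. E w} * k"
proof -
  let ?O = "\<lambda>w. if E w then Some (F w) else None"
  let ?Q = "\<lambda>q. measure_pmf.prob M (?O -` {q})"
  let ?A = "insert None (Some ` Fs)"
  define m where "m = measure_pmf.prob M {w. E w}"
  have A: "finite ?A" "?O ` set_pmf M \<subseteq> ?A" using Fs by auto
  have ent: "ent M ?O = - (?Q None * log 2 (?Q None) + (\<Sum>f\<in>Fs. ?Q (Some f) * log 2 (?Q (Some f))))"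
    unfolding ent_eq_sum_over[OF A] using Fs by (simp add: sum.reindex)
  have "?O -` {None} = UNIV - {w. E w}" by auto
  then have None: "?Q None = 1 - m" unfolding m_def
    using measure_pmf.prob_compl[of "{w. E w}" M] by simp
  have "?Q None + (\<Sum>f\<in>Fs. ?Q (Some f)) = 1"
    using sum_prob_vimage_eq_1[OF fin A] Fs by (simp add: sum.reindex)
  then have Some: "(\<Sum>f\<in>Fs. ?Q (Some f)) = m" using None by simp
  have m: "0 \<le> m" "m \<le> 1" unfolding m_def by auto
  have "log 2 (card Fs) \<le> k"
  proof (cases "card Fs = 0")
    case False
    then have "log 2 (card Fs) \<le> log 2 (2 ^ k)" using card by (subst log_le_cancel_iff) auto
    then show ?thesis by (simp add: log_nat_power)
  qed (simp add: log_def)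
  then have "- (\<Sum>f\<in>Fs. ?Q (Some f) * log 2 (?Q (Some f))) \<le> m * k - m * log 2 m"
    using neg_sum_mult_log_le_log_card[OF Fs(1), of "\<lambda>f. ?Q (Some f)"] Some m
    by (smt (verit) mult_left_mono measure_nonneg)
  moreover have "- (m * log 2 m) - (1 - m) * log 2 (1 - m) \<le> 1" by (rule binary_entropy_le_1[OF m])
  ultimately show ?thesis unfolding ent None m_def[symmetric] by linarith
qed

text \<open>With \<open>m = P(B)\<close> and \<open>c = P(C)\<close>, the right-hand side is \<open>I(B;C) - x log x - y log y + y log c\<close>
  (see \<open>mut_inf_bool_eq\<close>): in the divergence sum defining \<open>I(B;C)\<close>, the two cells outside
  \<open>C\<close> contribute a nonnegative amount by Gibbs' inequality, and \<open>log m, log c \<le> 0\<close>.\<close>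

lemma four_cell_log_bound:
  fixes x y u v :: real
  assumes nn: "0 \<le> x" "0 \<le> y" "0 \<le> u" "0 \<le> v" and s: "x + y + u + v = 1"
  shows "y * (- log 2 (1 - (x + u))) \<le>
    (- ((x+u) * log 2 (x+u) + (1-(x+u)) * log 2 (1-(x+u))) - ((x+y) * log 2 (x+y) + (1-(x+y)) * log 2 (1-(x+y)))
      + (x * log 2 x + y * log 2 y + u * log 2 u + v * log 2 v)) - x * log 2 x - y * log 2 y + y * log 2 (x + y)"
proof -
  define m where "m = x + u"
  define c where "c = x + y"
  have m1: "1 - m = y + v" and c1: "1 - c = u + v" using s by (auto simp: m_def c_def)
  have lm': "log 2 m \<le> 0" 
  proof (cases "m = 0")
    case False then show ?thesis using nn s by (simp add: m_def)
  qed (simp add: log_def)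
  have lc': "log 2 c \<le> 0"
  proof (cases "c = 0")
    case False then show ?thesis using nn s by (simp add: c_def)
  qed (simp add: log_def)
  have b3: "(u - m * (1 - c)) / ln 2 \<le> u * log 2 u - u * log 2 m - u * log 2 (1 - c)"
  proof (cases "u = 0")
    case True then show ?thesis using nn s by (simp add: divide_nonpos_pos m_def c_def)
  next
    case False
    then have "0 < u" using nn by simp
    then have p: "0 < m" "0 < 1 - c" using nn by (auto simp: m_def c1)
    have k: "(u - m * (1 - c)) / ln 2 \<le> u * (log 2 u - log 2 (m * (1 - c)))"
      by (rule divergence_term_ge) (use nn p in auto)
    have e: "log 2 (m * (1 - c)) = log 2 m + log 2 (1 - c)" using p by (simp add: log_mult)
    show ?thesis using k unfolding e by (simp add: algebra_simps)
  qed
  have b4: "(v - (1 - m) * (1 - c)) / ln 2 \<le> v * log 2 v - v * log 2 (1 - m) - v * log 2 (1 - c)"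
  proof (cases "v = 0")
    case True then show ?thesis using nn s by (simp add: divide_nonpos_pos m1 c1)
  next
    case False
    then have "0 < v" using nn by simp
    then have p: "0 < 1 - m" "0 < 1 - c" using nn by (auto simp: m1 c1)
    have k: "(v - (1 - m) * (1 - c)) / ln 2 \<le> v * (log 2 v - log 2 ((1 - m) * (1 - c)))"
      by (rule divergence_term_ge) (use nn p in auto)
    have e: "log 2 ((1 - m) * (1 - c)) = log 2 (1 - m) + log 2 (1 - c)" using p by (simp add: log_mult)
    show ?thesis using k unfolding e by (simp add: algebra_simps)
  qed
  have b34: "0 \<le> (u * log 2 u - u * log 2 m - u * log 2 (1 - c)) + (v * log 2 v - v * log 2 (1 - m) - v * log 2 (1 - c))"
  proof -
    have "(u - m * (1 - c)) / ln 2 + (v - (1 - m) * (1 - c)) / ln 2 = (u + v - (1 - c)) / ln 2"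
      by (simp add: field_simps)
    also have "\<dots> = 0" using c1 by simp
    finally show ?thesis using b3 b4 by linarith
  qed
  have b1: "0 \<le> - x * log 2 m - x * log 2 c"
  proof -
    have "x * log 2 m \<le> 0" "x * log 2 c \<le> 0" using lm' lc' nn by (auto simp: mult_nonneg_nonpos)
    then show ?thesis by linarith
  qed
  have expand: "(- (m * log 2 m + (1-m) * log 2 (1-m)) - (c * log 2 c + (1-c) * log 2 (1-c))
      + (x * log 2 x + y * log 2 y + u * log 2 u + v * log 2 v))
    = (x * log 2 x - x * log 2 m - x * log 2 c) + (y * log 2 y - y * log 2 (1 - m) - y * log 2 c)
      + (u * log 2 u - u * log 2 m - u * log 2 (1 - c)) + (v * log 2 v - v * log 2 (1 - m) - v * log 2 (1 - c))"
    unfolding m1 c1 by (simp add: m_def c_def algebra_simps)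
  show ?thesis
    using expand b34 b1 unfolding m_def[symmetric] c_def[symmetric] by (simp add: algebra_simps)
qed

lemma mut_inf_bool_eq:
  fixes B C :: "'w \<Rightarrow> bool"
  assumes fin: "finite (set_pmf M)"
  defines "x \<equiv> measure_pmf.prob M {w. B w \<and> C w}" and "y \<equiv> measure_pmf.prob M {w. \<not> B w \<and> C w}"
    and "u \<equiv> measure_pmf.prob M {w. B w \<and> \<not> C w}" and "v \<equiv> measure_pmf.prob M {w. \<not> B w \<and> \<not> C w}"
  shows "x + y + u + v = 1"
    and "mut_inf M B C = (- ((x+u) * log 2 (x+u) + (1-(x+u)) * log 2 (1-(x+u))) - ((x+y) * log 2 (x+y) + (1-(x+y)) * log 2 (1-(x+y)))
      + (x * log 2 x + y * log 2 y + u * log 2 u + v * log 2 v))"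
proof -
  have U: "(UNIV::(bool\<times>bool) set) = {(True,True),(True,False),(False,True),(False,False)}" by auto
  have p1: "(\<lambda>w. (B w, C w)) -` {(True,True)} = {w. B w \<and> C w}" by auto
  have p2: "(\<lambda>w. (B w, C w)) -` {(True,False)} = {w. B w \<and> \<not> C w}" by auto
  have p3: "(\<lambda>w. (B w, C w)) -` {(False,True)} = {w. \<not> B w \<and> C w}" by auto
  have p4: "(\<lambda>w. (B w, C w)) -` {(False,False)} = {w. \<not> B w \<and> \<not> C w}" by auto
  have bt: "B -` {True} = {w. B w}" "B -` {False} = {w. \<not> B w}" by auto
  have ct: "C -` {True} = {w. C w}" "C -` {False} = {w. \<not> C w}" by auto
  have mB: "measure_pmf.prob M {w. B w} = x + u" "measure_pmf.prob M {w. \<not> B w} = y + v"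
    unfolding x_def u_def y_def v_def by (rule prob_split_conj)+
  have mC: "measure_pmf.prob M {w. C w} = x + y" "measure_pmf.prob M {w. \<not> C w} = u + v"
    using prob_split_conj[of M C B] prob_split_conj[of M "\<lambda>w. \<not> C w" B] unfolding x_def u_def y_def v_def
    by (simp_all add: conj_commute)
  have tot: "(\<Sum>t\<in>UNIV. measure_pmf.prob M ((\<lambda>w. (B w, C w)) -` {t})) = 1"
    by (rule sum_prob_vimage_eq_1[OF fin]) auto
  then show T: "x + y + u + v = 1" unfolding U using p1 p2 p3 p4 by (simp add: x_def y_def u_def v_def)
  have eB: "ent M B = - ((x+u) * log 2 (x+u) + (y+v) * log 2 (y+v))"
    by (subst ent_eq_sum_over[of UNIV]) (auto simp: UNIV_bool bt mB)
  have eC: "ent M C = - ((x+y) * log 2 (x+y) + (u+v) * log 2 (u+v))"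
    by (subst ent_eq_sum_over[of UNIV]) (auto simp: UNIV_bool ct mC)
  have eBC: "ent M (\<lambda>w. (B w, C w)) = - (x * log 2 x + u * log 2 u + y * log 2 y + v * log 2 v)"
    by (subst ent_eq_sum_over[of UNIV]) (auto simp: U p1 p2 p3 p4 x_def y_def u_def v_def)
  have e1: "y + v = 1 - (x + u)" and e2: "u + v = 1 - (x + y)" using T by auto
  show "mut_inf M B C = (- ((x+u) * log 2 (x+u) + (1-(x+u)) * log 2 (1-(x+u))) - ((x+y) * log 2 (x+y) + (1-(x+y)) * log 2 (1-(x+y)))
      + (x * log 2 x + y * log 2 y + u * log 2 u + v * log 2 v))"
    unfolding mut_inf_def eB eC eBC e1 e2 by simp
qed

lemma mut_inf_bool_lower_bound:
  fixes B C :: "'w \<Rightarrow> bool"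
  assumes fin: "finite (set_pmf M)"
  defines "x \<equiv> measure_pmf.prob M {w. B w \<and> C w}" and "y \<equiv> measure_pmf.prob M {w. \<not> B w \<and> C w}"
  shows "y * measure_pmf.prob M {w. B w} / ln 2 \<le>
    mut_inf M B C - x * log 2 x - y * log 2 y + y * log 2 (measure_pmf.prob M {w. C w})"
proof -
  define u where "u = measure_pmf.prob M {w. B w \<and> \<not> C w}"
  define v where "v = measure_pmf.prob M {w. \<not> B w \<and> \<not> C w}"
  define m where "m = measure_pmf.prob M {w. B w}"
  have nn: "0 \<le> x" "0 \<le> y" "0 \<le> u" "0 \<le> v" by (auto simp: x_def y_def u_def v_def)
  have T: "x + y + u + v = 1" unfolding x_def y_def u_def v_def by (rule mut_inf_bool_eq(1)[OF fin])
  have m: "m = x + u" unfolding m_def x_def u_def by (rule prob_split_conj)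
  have c: "measure_pmf.prob M {w. C w} = x + y"
    using prob_split_conj[of M C B] unfolding x_def y_def by (simp add: conj_commute)
  have "y * m / ln 2 \<le> y * (- log 2 (1 - m))"
  proof (cases "y = 0")
    case False
    then have pos: "0 < 1 - m" using nn T m by simp
    have "m \<le> - ln (1 - m)" using ln_le_minus_one[OF pos] by simp
    then have "m / ln 2 \<le> - ln (1 - m) / ln 2" by (rule divide_right_mono) simp
    then have "m / ln 2 \<le> - log 2 (1 - m)" by (simp add: log_def)
    from mult_left_mono[OF this nn(2)] show ?thesis by simp
  qed simp
  also have "\<dots> \<le> mut_inf M B C - x * log 2 x - y * log 2 y + y * log 2 (x + y)"
    unfolding m mut_inf_bool_eq(2)[OF fin, of B C, folded x_def y_def u_def v_def]
    by (rule four_cell_log_bound[OF nn T])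
  finally show ?thesis unfolding m_def c .
qed

lemma tendsto_mult_log_self:
  fixes a :: "nat \<Rightarrow> real"
  assumes "a \<longlonglongrightarrow> 0" and "\<And>n. 0 \<le> a n"
  shows "(\<lambda>n. a n * log 2 (a n)) \<longlonglongrightarrow> 0"
proof -
  have "((\<lambda>x::real. x * log 2 x) \<longlongrightarrow> 0) (at_right 0)" by real_asymp
  then have "continuous (at 0 within {0..}) (\<lambda>x::real. x * log 2 x)"
    by (simp add: continuous_within at_within_Ici_at_right)
  from continuous_within_tendsto_compose'[OF this _ assms(1)] show ?thesis
    using assms(2) by simp
qed

lemma prob_tendsto_0_if_mut_inf_tendsto_0:
  fixes M :: "nat \<Rightarrow> 'w pmf" and B C :: "nat \<Rightarrow> 'w \<Rightarrow> bool" and J :: "nat \<Rightarrow> real"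
  assumes fin: "\<And>n. finite (set_pmf (M n))"
    and C: "\<And>n. measure_pmf.prob (M n) {w. C n w} = c" and c: "0 < c"
    and BC: "(\<lambda>n. measure_pmf.prob (M n) {w. B n w \<and> C n w}) \<longlonglongrightarrow> 0"
    and I: "\<And>n. mut_inf (M n) (B n) (C n) \<le> J n" and J: "J \<longlonglongrightarrow> 0"
  shows "(\<lambda>n. measure_pmf.prob (M n) {w. B n w}) \<longlonglongrightarrow> 0"
proof -
  define x where "x n = measure_pmf.prob (M n) {w. B n w \<and> C n w}" for n
  define y where "y n = measure_pmf.prob (M n) {w. \<not> B n w \<and> C n w}" for n
  define m where "m n = measure_pmf.prob (M n) {w. B n w}" for n
  define R where "R n = J n - x n * log 2 (x n) - y n * log 2 (y n) + y n * log 2 c" for n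
  have y: "y n = c - x n" for n
    using prob_split_conj[of "M n" "C n" "B n"] C[of n] unfolding x_def y_def by (simp add: conj_commute)
  have x: "x \<longlonglongrightarrow> 0" using BC unfolding x_def .
  then have y_lim: "y \<longlonglongrightarrow> c" unfolding y using tendsto_diff[OF tendsto_const x, of c] by simp
  have "(\<lambda>n. x n * log 2 (x n)) \<longlonglongrightarrow> 0"
    by (rule tendsto_mult_log_self[OF x]) (simp add: x_def)
  moreover have "(\<lambda>n. y n * log 2 (y n)) \<longlonglongrightarrow> c * log 2 c"
    using c by (intro tendsto_mult tendsto_log y_lim tendsto_const) auto
  moreover have "(\<lambda>n. y n * log 2 c) \<longlonglongrightarrow> c * log 2 c"
    by (intro tendsto_mult y_lim tendsto_const)
  ultimately have "(\<lambda>n. J n - x n * log 2 (x n) - y n * log 2 (y n) + y n * log 2 c)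
      \<longlonglongrightarrow> 0 - 0 - c * log 2 c + c * log 2 c"
    by (intro tendsto_add tendsto_diff J)
  then have R: "R \<longlonglongrightarrow> 0" unfolding R_def by simp
  have "\<forall>\<^sub>F n in sequentially. c / 2 < y n"
    using c by (intro order_tendstoD(1)[OF y_lim]) simp
  then have "\<forall>\<^sub>F n in sequentially. m n \<le> (2 * ln 2 / c) * R n"
  proof (rule eventually_mono)
    fix n assume yn: "c / 2 < y n"
    have "y n * m n / ln 2 \<le> R n"
      using mut_inf_bool_lower_bound[OF fin, of n "B n" "C n"] I[of n]
      unfolding R_def x_def y_def m_def C by linarith
    moreover have "c / 2 * m n / ln 2 \<le> y n * m n / ln 2"
      using yn by (intro divide_right_mono mult_right_mono) (simp_all add: m_def)
    ultimately show "m n \<le> (2 * ln 2 / c) * R n" using c by (simp add: field_simps)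
  qed
  moreover have "(\<lambda>n. (2 * ln 2 / c) * R n) \<longlonglongrightarrow> 0" using tendsto_mult_right_zero[OF R] .
  ultimately have "m \<longlonglongrightarrow> 0"
    by (intro tendsto_sandwich[of "\<lambda>_. 0" m sequentially "\<lambda>n. (2 * ln 2 / c) * R n"])
      (simp_all add: m_def)
  then show ?thesis unfolding m_def .
qed

lemma prob_eq_sum_fibres:
  assumes fin: "finite (set_pmf M)"
  shows "measure_pmf.prob M A = (\<Sum>t\<in>T ` set_pmf M. measure_pmf.prob M (A \<inter> T -` {t}))"
proof -
  have "(\<Sum>t\<in>T ` set_pmf M. measure_pmf.prob M (A \<inter> T -` {t}))
      = (\<Sum>t\<in>T ` set_pmf M. \<Sum>w\<in>{w\<in>set_pmf M. T w = t}. if w \<in> A then pmf M w else 0)"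
  proof (rule sum.cong[OF refl])
    fix t
    have "A \<inter> T -` {t} \<inter> set_pmf M = {w\<in>set_pmf M. T w = t} \<inter> A" by auto
    then show "measure_pmf.prob M (A \<inter> T -` {t}) = (\<Sum>w\<in>{w\<in>set_pmf M. T w = t}. if w \<in> A then pmf M w else 0)"
      using fin by (simp add: prob_eq_sum_pmf[OF fin] sum.inter_restrict)
  qed
  also have "\<dots> = (\<Sum>w\<in>set_pmf M. if w \<in> A then pmf M w else 0)"
    by (rule sum.image_gen[OF fin, symmetric])
  also have "\<dots> = measure_pmf.prob M A"
    using fin by (simp add: prob_eq_sum_pmf sum.inter_restrict[symmetric] Int_commute)
  finally show ?thesis by simp
qed

text \<open>\<open>F\<close> and \<open>R\<close> are conditionally independent given \<open>V\<close>, in the form of a product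
  rule that avoids dividing by \<open>P(V = v)\<close>.\<close>

definition markov_chain :: "'w pmf \<Rightarrow> ('w \<Rightarrow> 'f) \<Rightarrow> ('w \<Rightarrow> 'v) \<Rightarrow> ('w \<Rightarrow> 'r) \<Rightarrow> bool" where
  "markov_chain M F V R \<longleftrightarrow> (\<forall>A v B.
     measure_pmf.prob M {w. F w \<in> A \<and> V w = v \<and> R w \<in> B} * measure_pmf.prob M {w. V w = v}
     = measure_pmf.prob M {w. F w \<in> A \<and> V w = v} * measure_pmf.prob M {w. V w = v \<and> R w \<in> B})"

lemma markov_chain_fun_left:
  assumes "markov_chain M F V R"
  shows "markov_chain M (\<lambda>w. g (F w)) V R"
  unfolding markov_chain_def
proof (intro allI)
  fix A v B
  show "measure_pmf.prob M {w. g (F w) \<in> A \<and> V w = v \<and> R w \<in> B} * measure_pmf.prob M {w. V w = v}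
    = measure_pmf.prob M {w. g (F w) \<in> A \<and> V w = v} * measure_pmf.prob M {w. V w = v \<and> R w \<in> B}"
    using assms[unfolded markov_chain_def, rule_format, of "g -` A" v B] by simp
qed

text \<open>The maximum a posteriori estimate of \<open>F\<close> from \<open>V\<close>; off the support it is arbitrary.\<close>

definition map_estimate :: "'w pmf \<Rightarrow> ('w \<Rightarrow> 'f) \<Rightarrow> ('w \<Rightarrow> 'v) \<Rightarrow> 'v \<Rightarrow> 'f" where
  "map_estimate M F V v = (SOME f. \<forall>f'. measure_pmf.prob M {w. F w = f' \<and> V w = v}
                                        \<le> measure_pmf.prob M {w. F w = f \<and> V w = v})"

lemma map_estimate_max:
  assumes fin: "finite (set_pmf M)"
  shows "measure_pmf.prob M {w. F w = f \<and> V w = v}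
    \<le> measure_pmf.prob M {w. F w = map_estimate M F V v \<and> V w = v}"
proof -
  let ?q = "\<lambda>f. measure_pmf.prob M {w. F w = f \<and> V w = v}"
  let ?C = "F ` set_pmf M"
  have C: "finite ?C" "?C \<noteq> {}" using fin set_pmf_not_empty by auto
  have "Max (?q ` ?C) \<in> ?q ` ?C" by (rule Max_in) (use C in auto)
  then obtain f0 where f0: "f0 \<in> ?C" "?q f0 = Max (?q ` ?C)" by (metis (no_types, lifting) imageE)
  have "\<forall>f'. ?q f' \<le> ?q f0"
  proof
    fix f'
    show "?q f' \<le> ?q f0"
    proof (cases "f' \<in> ?C")
      case True then show ?thesis using f0 C by simp
    next
      case False
      then have "{w. F w = f' \<and> V w = v} \<inter> set_pmf M = {}" by auto
      then have "?q f' = 0" by (metis measure_Int_set_pmf measure_empty)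
      then show ?thesis by simp
    qed
  qed
  then have "\<forall>f'. ?q f' \<le> ?q (map_estimate M F V v)" unfolding map_estimate_def by (rule someI)
  then show ?thesis by blast
qed

text \<open>Compare fibrewise over \<open>(V, R)\<close>: by the Markov property, the probability of guessing \<open>F\<close>
  correctly on \<open>{V = v, R = r}\<close> is proportional to that on \<open>{V = v}\<close>, where the MAP estimate
  is best.\<close>

lemma map_estimate_optimal:
  assumes fin: "finite (set_pmf M)" and mc: "markov_chain M F V R"
  shows "measure_pmf.prob M {w. F w = d (V w) (R w) \<and> Q (R w)}
    \<le> measure_pmf.prob M {w. F w = map_estimate M F V (V w) \<and> Q (R w)}"
proof -
  let ?T = "\<lambda>w. (V w, R w)" and ?g = "map_estimate M F V"
  have fibre: "measure_pmf.prob M {w. F w = f \<and> V w = v \<and> R w = r}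
      \<le> measure_pmf.prob M {w. F w = ?g v \<and> V w = v \<and> R w = r}" for f v r
  proof (cases "measure_pmf.prob M {w. V w = v} = 0")
    case True
    have "measure_pmf.prob M {w. F w = f \<and> V w = v \<and> R w = r} \<le> measure_pmf.prob M {w. V w = v}"
      by (rule measure_pmf.finite_measure_mono) auto
    then show ?thesis
      using True measure_nonneg[of "measure_pmf M" "{w. F w = ?g v \<and> V w = v \<and> R w = r}"] by linarith
  next
    case False
    then have pv: "0 < measure_pmf.prob M {w. V w = v}" by (simp add: zero_less_measure_iff)
    have mc': "measure_pmf.prob M {w. F w = f \<and> V w = v \<and> R w = r} * measure_pmf.prob M {w. V w = v}
      = measure_pmf.prob M {w. F w = f \<and> V w = v} * measure_pmf.prob M {w. V w = v \<and> R w = r}" for f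
      using mc[unfolded markov_chain_def, rule_format, of "{f}" v "{r}"] by simp
    have "measure_pmf.prob M {w. F w = f \<and> V w = v} * measure_pmf.prob M {w. V w = v \<and> R w = r}
      \<le> measure_pmf.prob M {w. F w = ?g v \<and> V w = v} * measure_pmf.prob M {w. V w = v \<and> R w = r}"
      by (rule mult_right_mono[OF map_estimate_max[OF fin]]) simp
    then have "measure_pmf.prob M {w. F w = f \<and> V w = v \<and> R w = r} * measure_pmf.prob M {w. V w = v}
      \<le> measure_pmf.prob M {w. F w = ?g v \<and> V w = v \<and> R w = r} * measure_pmf.prob M {w. V w = v}"
      by (simp only: mc')
    then show ?thesis using pv by simp
  qed
  have "measure_pmf.prob M {w. F w = d (V w) (R w) \<and> Q (R w)}
      = (\<Sum>t\<in>?T ` set_pmf M. measure_pmf.prob M ({w. F w = d (V w) (R w) \<and> Q (R w)} \<inter> ?T -` {t}))"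
    by (rule prob_eq_sum_fibres[OF fin])
  also have "\<dots> \<le> (\<Sum>t\<in>?T ` set_pmf M. measure_pmf.prob M ({w. F w = ?g (V w) \<and> Q (R w)} \<inter> ?T -` {t}))"
  proof (rule sum_mono)
    fix t assume "t \<in> ?T ` set_pmf M"
    obtain v r where t: "t = (v, r)" by (cases t)
    show "measure_pmf.prob M ({w. F w = d (V w) (R w) \<and> Q (R w)} \<inter> ?T -` {t})
      \<le> measure_pmf.prob M ({w. F w = ?g (V w) \<and> Q (R w)} \<inter> ?T -` {t})"
    proof (cases "Q r")
      case True
      have "{w. F w = d (V w) (R w) \<and> Q (R w)} \<inter> ?T -` {t} = {w. F w = d v r \<and> V w = v \<and> R w = r}"
        "{w. F w = ?g (V w) \<and> Q (R w)} \<inter> ?T -` {t} = {w. F w = ?g v \<and> V w = v \<and> R w = r}"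
        using t True by auto
      then show ?thesis using fibre by simp
    next
      case False
      then have "{w. F w = d (V w) (R w) \<and> Q (R w)} \<inter> ?T -` {t} = {}" using t by auto
      then show ?thesis by simp
    qed
  qed
  also have "\<dots> = measure_pmf.prob M {w. F w = ?g (V w) \<and> Q (R w)}"
    by (rule prob_eq_sum_fibres[OF fin, symmetric])
  finally show ?thesis .
qed

lemma bool_lists_length:
  "finite {xs::bool list. length xs = k}" "card {xs::bool list. length xs = k} = 2 ^ k"
proof -
  have e: "{xs::bool list. length xs = k} = {xs. set xs \<subseteq> UNIV \<and> length xs = k}" by auto
  show "finite {xs::bool list. length xs = k}" unfolding e by (rule finite_lists_length_eq) simp
  show "card {xs::bool list. length xs = k} = 2 ^ k"
    unfolding e using card_lists_length_eq[of "UNIV::bool set" k] by simp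
qed

lemma all_files_nth: "l \<in> {1..L} \<Longrightarrow> all_files L f ! (l - 1) = f l"
  unfolding all_files_def by (subst nth_map) (auto simp: nth_upt simp del: upt_Suc)

text \<open>One server, abstracted from the protocol.  Its view is \<open>(X n, A n)\<close>; the client decodes the
  file with index \<open>Zown\<close> from this view together with further data \<open>R n\<close>, which is conditionally
  independent of the files given the view (and determines \<open>Zown\<close>); and the server's total
  knowledge, including its randomness \<open>U\<close>, is almost independent of the client's indices \<open>Z\<close>.\<close>

locale server_view =
  fixes M :: "nat \<Rightarrow> 'w pmf" and F :: "'w \<Rightarrow> files" and L :: nat and len :: "nat \<Rightarrow> nat"
    and X :: "nat \<Rightarrow> 'w \<Rightarrow> 'x" and A :: "nat \<Rightarrow> 'w \<Rightarrow> 'a" and U :: "'w \<Rightarrow> 'u"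
    and Z :: "'w \<Rightarrow> 'z" and own :: "'z \<Rightarrow> nat" and Zown :: "'w \<Rightarrow> nat"
    and R :: "nat \<Rightarrow> 'w \<Rightarrow> 'r" and \<zeta> :: "'r \<Rightarrow> nat" and dec :: "nat \<Rightarrow> 'x \<times> 'a \<Rightarrow> 'r \<Rightarrow> bool list"
    and p :: "nat \<Rightarrow> real" and K :: real
  assumes fin: "\<And>n. finite (set_pmf (M n))"
    and L: "1 \<le> L"
    and file_length: "\<And>n w l. w \<in> set_pmf (M n) \<Longrightarrow> l \<in> {1..L} \<Longrightarrow> length (F w l) = len n"
    and len_le: "\<And>n. real (len n) \<le> real n * K"
    and Zown_own: "\<And>w. Zown w = own (Z w)"
    and Zown_R: "\<And>n w. Zown w = \<zeta> (R n w)"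
    and Zown_uniform: "\<And>n l. l \<in> {1..L} \<Longrightarrow> measure_pmf.prob (M n) {w. Zown w = l} = 1 / L"
    and markov: "\<And>n. markov_chain (M n) F (\<lambda>w. (X n w, A n w)) (R n)"
    and dec_error: "\<And>n. measure_pmf.prob (M n) {w. dec n (X n w, A n w) (R n w) \<noteq> F w (Zown w)} \<le> p n"
    and p: "p \<longlonglongrightarrow> 0"
    and index_privacy: "(\<lambda>n. mut_inf (M n) (\<lambda>w. (all_files L (F w), X n w, U w, A n w)) Z) \<longlonglongrightarrow> 0"
begin

definition map_file :: "nat \<Rightarrow> nat \<Rightarrow> 'x \<times> 'a \<Rightarrow> bool list" where
  "map_file n l = map_estimate (M n) (\<lambda>w. F w l) (\<lambda>w. (X n w, A n w))"

definition map_error :: "nat \<Rightarrow> nat \<Rightarrow> 'w \<Rightarrow> bool" where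
  "map_error n l w \<longleftrightarrow> map_file n l (X n w, A n w) \<noteq> F w l"

lemma prob_map_error_own_le:
  assumes "l \<in> {1..L}"
  shows "measure_pmf.prob (M n) {w. map_error n l w \<and> Zown w = l} \<le> p n"
proof -
  let ?V = "\<lambda>w. (X n w, A n w)" and ?Q = "\<lambda>r. \<zeta> r = l"
  have "measure_pmf.prob (M n) {w. F w l = dec n (?V w) (R n w) \<and> ?Q (R n w)}
      \<le> measure_pmf.prob (M n) {w. F w l = map_file n l (?V w) \<and> ?Q (R n w)}"
    unfolding map_file_def
    by (rule map_estimate_optimal[OF fin markov_chain_fun_left[OF markov]])
  moreover have "measure_pmf.prob (M n) {w. ?Q (R n w)}
      = measure_pmf.prob (M n) {w. ?Q (R n w) \<and> F w l = map_file n l (?V w)}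
      + measure_pmf.prob (M n) {w. ?Q (R n w) \<and> \<not> F w l = map_file n l (?V w)}"
    "measure_pmf.prob (M n) {w. ?Q (R n w)}
      = measure_pmf.prob (M n) {w. ?Q (R n w) \<and> F w l = dec n (?V w) (R n w)}
      + measure_pmf.prob (M n) {w. ?Q (R n w) \<and> \<not> F w l = dec n (?V w) (R n w)}"
    by (rule prob_split_conj)+
  moreover have "measure_pmf.prob (M n) {w. ?Q (R n w) \<and> \<not> F w l = dec n (?V w) (R n w)}
      \<le> measure_pmf.prob (M n) {w. dec n (?V w) (R n w) \<noteq> F w (Zown w)}"
    by (rule measure_pmf.finite_measure_mono) (auto simp: Zown_R[of _ n])
  moreover have "{w. map_error n l w \<and> Zown w = l} = {w. ?Q (R n w) \<and> \<not> F w l = map_file n l (?V w)}"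
    by (auto simp: map_error_def Zown_R[of _ n])
  ultimately show ?thesis using dec_error[of n] by (simp add: conj_commute)
qed

lemma prob_map_error_tendsto_0:
  assumes l: "l \<in> {1..L}"
  shows "(\<lambda>n. measure_pmf.prob (M n) {w. map_error n l w}) \<longlonglongrightarrow> 0"
proof (rule prob_tendsto_0_if_mut_inf_tendsto_0[OF fin Zown_uniform[OF l]])
  show "0 < 1 / real L" using L by simp
  have "\<forall>\<^sub>F n in sequentially. measure_pmf.prob (M n) {w. map_error n l w \<and> Zown w = l} \<le> p n"
    using prob_map_error_own_le[OF l] by simp
  then show "(\<lambda>n. measure_pmf.prob (M n) {w. map_error n l w \<and> Zown w = l}) \<longlonglongrightarrow> 0"
    by (intro tendsto_sandwich[OF _ _ tendsto_const p]) simp_all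
  show "mut_inf (M n) (map_error n l) (\<lambda>w. Zown w = l)
    \<le> mut_inf (M n) (\<lambda>w. (all_files L (F w), X n w, U w, A n w)) Z" for n
  proof -
    have e1: "map_error n l = (\<lambda>w. (\<lambda>(fs, x, u, a). map_file n l (x, a) \<noteq> fs ! (l - 1))
        (all_files L (F w), X n w, U w, A n w))"
      by (intro ext) (simp add: map_error_def all_files_nth[OF l, simplified])
    have e2: "(\<lambda>w. Zown w = l) = (\<lambda>w. own (Z w) = l)" by (simp add: Zown_own)
    show ?thesis unfolding e1 e2 by (rule mut_inf_fun_le[OF fin])
  qed
qed (rule index_privacy)

text \<open>Given the server's view and the client's indices, the other files are recovered from
  the MAP estimates once the files on which these estimates err are revealed; Fano's
  inequality bounds the cost of revealing them.\<close>

lemma cond_ent_other_files_le: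
  "cond_ent (M n) (\<lambda>w. other_files L (F w) (Zown w)) (\<lambda>w. (X n w, A n w, Z w))
    \<le> (\<Sum>l\<in>{1..L}. 1 + measure_pmf.prob (M n) {w. map_error n l w} * len n)"
proof -
  define revealed where "revealed l w = (if map_error n l w then Some (F w l) else None)" for l w
  define recover where "recover = (\<lambda>(x, a, z) (k :: bool list option list).
    map (\<lambda>l. case k ! (l - 1) of None \<Rightarrow> map_file n l (x, a) | Some f \<Rightarrow> f)
      (filter (\<lambda>l. l \<noteq> own z) [1..<Suc L]))"
  have "other_files L (F w) (Zown w)
      = recover (X n w, A n w, Z w) (map (\<lambda>l. revealed l w) [1..<Suc L])" for w
    unfolding other_files_def recover_def Zown_own
    by (auto simp: revealed_def map_error_def nth_upt simp del: upt_Suc intro!: map_cong)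
  then have "cond_ent (M n) (\<lambda>w. other_files L (F w) (Zown w)) (\<lambda>w. (X n w, A n w, Z w))
      \<le> ent (M n) (\<lambda>w. map (\<lambda>l. revealed l w) [1..<Suc L])"
    by (rule cond_ent_le_ent_if_determined[OF fin])
  also have "\<dots> \<le> (\<Sum>l\<leftarrow>[1..<Suc L]. ent (M n) (revealed l))" by (rule ent_list_le_sum[OF fin])
  also have "\<dots> = (\<Sum>l\<in>{1..L}. ent (M n) (revealed l))"
    by (simp only: sum_set_upt_conv_sum_list_nat[symmetric] set_upt atLeastLessThanSuc_atLeastAtMost)
  also have "\<dots> \<le> (\<Sum>l\<in>{1..L}. 1 + measure_pmf.prob (M n) {w. map_error n l w} * len n)"
  proof (rule sum_mono)
    fix l assume l: "l \<in> {1..L}"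
    show "ent (M n) (revealed l) \<le> 1 + measure_pmf.prob (M n) {w. map_error n l w} * len n"
      unfolding revealed_def
      by (rule ent_option_le[OF fin bool_lists_length(1)]) (use file_length[OF _ l] bool_lists_length(2) in auto)
  qed
  finally show ?thesis .
qed

theorem cond_ent_other_files_sublinear:
  "(\<lambda>n. cond_ent (M n) (\<lambda>w. other_files L (F w) (Zown w)) (\<lambda>w. (X n w, A n w, Z w)) / real n)
    \<longlonglongrightarrow> 0"
proof -
  let ?m = "\<lambda>n l. measure_pmf.prob (M n) {w. map_error n l w}"
  have bound: "cond_ent (M n) (\<lambda>w. other_files L (F w) (Zown w)) (\<lambda>w. (X n w, A n w, Z w)) / real n
      \<le> real L / real n + K * (\<Sum>l\<in>{1..L}. ?m n l)" if n: "1 \<le> n" for n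
  proof -
    have "(\<Sum>l\<in>{1..L}. ?m n l * len n) \<le> (\<Sum>l\<in>{1..L}. ?m n l * (real n * K))"
      by (rule sum_mono, rule mult_left_mono[OF len_le]) simp
    then have "(\<Sum>l\<in>{1..L}. 1 + ?m n l * len n) \<le> real L + real n * (K * (\<Sum>l\<in>{1..L}. ?m n l))"
      by (simp add: sum.distrib sum_distrib_left sum_distrib_right algebra_simps)
    then show ?thesis using cond_ent_other_files_le[of n] n by (simp add: field_simps)
  qed
  let ?upper = "\<lambda>n. real L / real n + K * (\<Sum>l\<in>{1..L}. ?m n l)"
  have "?upper \<longlonglongrightarrow> 0 + K * (\<Sum>l\<in>{1..L}. 0)"
    by (intro tendsto_add tendsto_mult tendsto_const lim_const_over_n tendsto_sum prob_map_error_tendsto_0)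
  then have upper: "?upper \<longlonglongrightarrow> 0" by simp
  show ?thesis
  proof (rule tendsto_sandwich[OF _ _ tendsto_const upper])
    show "\<forall>\<^sub>F n in sequentially.
      cond_ent (M n) (\<lambda>w. other_files L (F w) (Zown w)) (\<lambda>w. (X n w, A n w, Z w)) / real n \<le> ?upper n"
      using eventually_ge_at_top[of 1] by (rule eventually_mono) (rule bound)
    show "\<forall>\<^sub>F n in sequentially.
      0 \<le> cond_ent (M n) (\<lambda>w. other_files L (F w) (Zown w)) (\<lambda>w. (X n w, A n w, Z w)) / real n"
      by (simp add: cond_ent_nonneg[OF fin])
  qed
qed

end

definition adder_output :: "bool list \<Rightarrow> bool list \<Rightarrow> nat list" where
  "adder_output x y = map2 (\<lambda>a b. of_bool a + of_bool b) x y"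

lemma Yn_eq_adder_output: "Yn n P w = adder_output (Xn1 n P w) (Xn2 n P w)"
  by (simp add: Yn_def adder_output_def)

definition server_consistent :: "(nat \<Rightarrow> nat list \<Rightarrow> nat) \<Rightarrow> (nat \<times> nat) list \<Rightarrow> bool" where
  "server_consistent srv ps \<longleftrightarrow> (\<forall>j<length ps. snd (ps ! j) = srv (Suc j) (map fst (take j ps)))"

definition client_consistent :: "(nat \<Rightarrow> nat list \<Rightarrow> nat) \<Rightarrow> (nat \<times> nat) list \<Rightarrow> bool" where
  "client_consistent cli ps \<longleftrightarrow> (\<forall>j<length ps. fst (ps ! j) = cli (Suc j) (map snd (take (Suc j) ps)))"

lemma server_consistent_snoc:
  "server_consistent srv (qs @ [p]) \<longleftrightarrow>
    server_consistent srv qs \<and> snd p = srv (Suc (length qs)) (map fst qs)"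
  unfolding server_consistent_def
  by (simp add: All_less_Suc nth_append conj_commute)

lemma client_consistent_snoc:
  "client_consistent cli (qs @ [p]) \<longleftrightarrow>
    client_consistent cli qs \<and> fst p = cli (Suc (length qs)) (map snd qs @ [snd p])"
  unfolding client_consistent_def
  by (simp add: All_less_Suc nth_append conj_commute)

text \<open>Each of the two conditions involves the message functions of only one party; this is what
  makes the events \<open>view = v\<close> rectangles in the independent parts of the sample.\<close>

lemma run_rounds_eq_iff:
  "run_rounds r srv cli = ps \<longleftrightarrow>
    length ps = r \<and> server_consistent srv ps \<and> client_consistent cli ps"
proof (induction r arbitrary: ps)
  case 0
  then show ?case by (auto simp: run_rounds_def server_consistent_def client_consistent_def)
next
  case (Suc r)
  have run: "run_rounds (Suc r) srv cli = (let ps = run_rounds r srv cli; s = srv (Suc r) (map fst ps);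
      c = cli (Suc r) (map snd ps @ [s]) in ps @ [(c, s)])"
    by (simp add: run_rounds_def Let_def)
  show ?case
  proof (cases ps rule: rev_exhaust)
    case Nil
    then show ?thesis by (simp add: run Let_def)
  next
    case (snoc qs p)
    obtain c s where p: "p = (c, s)" by (cases p)
    show ?thesis
      unfolding snoc p run Let_def append1_eq_conv server_consistent_snoc client_consistent_snoc
      using Suc.IH[of qs] by auto
  qed
qed

lemma measure_pair_pmf_Times:
  assumes "finite (set_pmf A)" "finite (set_pmf B)"
  shows "measure_pmf.prob (pair_pmf A B) (X \<times> Y) = measure_pmf.prob A X * measure_pmf.prob B Y"
proof -
  have "(X \<times> Y) \<inter> set_pmf (pair_pmf A B) = (X \<inter> set_pmf A) \<times> (Y \<inter> set_pmf B)"
    by (auto simp: set_pair_pmf)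
  then have "measure_pmf.prob (pair_pmf A B) (X \<times> Y)
      = measure_pmf.prob (pair_pmf A B) ((X \<inter> set_pmf A) \<times> (Y \<inter> set_pmf B))"
    by (metis measure_Int_set_pmf)
  also have "\<dots> = measure_pmf.prob A (X \<inter> set_pmf A) * measure_pmf.prob B (Y \<inter> set_pmf B)"
    by (rule measure_pmf_prob_product) (use assms in \<open>auto intro: countable_finite\<close>)
  finally show ?thesis by (simp add: measure_Int_set_pmf)
qed

lemma markov_chain_if_rectangles:
  fixes M :: "'w pmf" and sa :: "'w \<Rightarrow> 'a" and sb :: "'w \<Rightarrow> 'b"
  assumes indep: "\<And>\<Phi> \<Psi>. measure_pmf.prob M {w. \<Phi> (sa w) \<and> \<Psi> (sb w)} = q1 \<Phi> * q2 \<Psi>"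
    and V: "\<And>v. \<exists>\<Phi>0 \<Psi>0. \<forall>w. V w = v \<longleftrightarrow> \<Phi>0 (sa w) \<and> \<Psi>0 (sb w)"
    and F: "\<And>w. F w = f (sa w)" and R: "\<And>w. R w = r (sb w)"
  shows "markov_chain M F V R"
  unfolding markov_chain_def
proof (intro allI)
  fix A v B
  from V[of v] obtain \<Phi>0 \<Psi>0 where v: "\<forall>w. V w = v \<longleftrightarrow> \<Phi>0 (sa w) \<and> \<Psi>0 (sb w)" by (elim exE)
  have sets: "{w. F w \<in> A \<and> V w = v \<and> R w \<in> B} = {w. (f (sa w) \<in> A \<and> \<Phi>0 (sa w)) \<and> (\<Psi>0 (sb w) \<and> r (sb w) \<in> B)}"
    "{w. V w = v} = {w. \<Phi>0 (sa w) \<and> \<Psi>0 (sb w)}"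
    "{w. F w \<in> A \<and> V w = v} = {w. (f (sa w) \<in> A \<and> \<Phi>0 (sa w)) \<and> \<Psi>0 (sb w)}"
    "{w. V w = v \<and> R w \<in> B} = {w. \<Phi>0 (sa w) \<and> (\<Psi>0 (sb w) \<and> r (sb w) \<in> B)}"
    using v by (auto simp: F R)
  show "measure_pmf.prob M {w. F w \<in> A \<and> V w = v \<and> R w \<in> B} * measure_pmf.prob M {w. V w = v}
    = measure_pmf.prob M {w. F w \<in> A \<and> V w = v} * measure_pmf.prob M {w. V w = v \<and> R w \<in> B}"
    unfolding sets
    using indep[of "\<lambda>a. f a \<in> A \<and> \<Phi>0 a" "\<lambda>b. \<Psi>0 b \<and> r b \<in> B"] indep[of \<Phi>0 \<Psi>0]
      indep[of "\<lambda>a. f a \<in> A \<and> \<Phi>0 a" \<Psi>0] indep[of \<Phi>0 "\<lambda>b. \<Psi>0 b \<and> r b \<in> B"]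
    by (simp add: mult_ac)
qed

lemma prob_eq_inverse_card:
  assumes "map_pmf X M = pmf_of_set S" "finite S" "l \<in> S"
  shows "measure_pmf.prob M {w. X w = l} = 1 / card S"
proof -
  have "{w. X w = l} = X -` {l}" by auto
  then have "measure_pmf.prob M {w. X w = l} = measure_pmf.prob (map_pmf X M) {l}"
    by (simp add: measure_map_pmf)
  also have "\<dots> = measure_pmf.prob (pmf_of_set S) {l}" by (simp only: assms(1))
  also have "\<dots> = 1 / card S" using assms by (subst measure_pmf_of_set) auto
  finally show ?thesis .
qed

definition files_pmf :: "nat \<Rightarrow> nat \<Rightarrow> files pmf" where
  "files_pmf L k = pmf_of_set (file_set L k)"

definition index_pmf :: "nat \<Rightarrow> nat pmf" where
  "index_pmf L = pmf_of_set {1..L}"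

lemma file_set_finite: "finite (file_set L k)"
  unfolding file_set_def by (rule finite_PiE) (auto simp: bool_lists_length(1))

lemma file_set_nonempty: "file_set L k \<noteq> {}"
  unfolding file_set_def PiE_eq_empty_iff by (auto intro: exI[of _ "replicate k False"])

lemma length_file_set: "f \<in> file_set L k \<Longrightarrow> l \<in> {1..L} \<Longrightarrow> length (f l) = k"
  by (simp add: file_set_def PiE_iff)

lemma set_files_pmf [simp]: "set_pmf (files_pmf L k) = file_set L k"
  unfolding files_pmf_def by (simp add: file_set_finite file_set_nonempty)

lemma set_index_pmf [simp]: "1 \<le> L \<Longrightarrow> set_pmf (index_pmf L) = {1..L}"
  unfolding index_pmf_def by simp

definition part1 :: "nat \<Rightarrow> spir_protocol \<Rightarrow> (files \<times> nat) pmf" where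
  "part1 L1 P = pair_pmf (files_pmf L1 (len1 P)) (pU1 P)"

definition rest1 :: "nat \<Rightarrow> nat \<Rightarrow> spir_protocol \<Rightarrow> (files \<times> nat \<times> nat \<times> nat \<times> nat) pmf" where
  "rest1 L1 L2 P = pair_pmf (files_pmf L2 (len2 P))
     (pair_pmf (pU0 P) (pair_pmf (pU2 P) (pair_pmf (index_pmf L1) (index_pmf L2))))"

definition part2 :: "nat \<Rightarrow> spir_protocol \<Rightarrow> (files \<times> nat) pmf" where
  "part2 L2 P = pair_pmf (files_pmf L2 (len2 P)) (pU2 P)"

definition rest2 :: "nat \<Rightarrow> nat \<Rightarrow> spir_protocol \<Rightarrow> (files \<times> nat \<times> nat \<times> nat \<times> nat) pmf" where
  "rest2 L1 L2 P = pair_pmf (files_pmf L1 (len1 P))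
     (pair_pmf (pU0 P) (pair_pmf (pU1 P) (pair_pmf (index_pmf L1) (index_pmf L2))))"

definition assemble1 :: "(files \<times> nat) \<times> (files \<times> nat \<times> nat \<times> nat \<times> nat) \<Rightarrow> spir_sample" where
  "assemble1 = (\<lambda>((f1, u1), (f2, u0, u2, z1, z2)).
     \<lparr>sF1 = f1, sF2 = f2, sU0 = u0, sU1 = u1, sU2 = u2, sZ1 = z1, sZ2 = z2\<rparr>)"

definition assemble2 :: "(files \<times> nat) \<times> (files \<times> nat \<times> nat \<times> nat \<times> nat) \<Rightarrow> spir_sample" where
  "assemble2 = (\<lambda>((f2, u2), (f1, u0, u1, z1, z2)).
     \<lparr>sF1 = f1, sF2 = f2, sU0 = u0, sU1 = u1, sU2 = u2, sZ1 = z1, sZ2 = z2\<rparr>)"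

lemma sample_pmf_split1: "sample_pmf L1 L2 P = map_pmf assemble1 (pair_pmf (part1 L1 P) (rest1 L1 L2 P))"
  unfolding sample_pmf_def part1_def rest1_def files_pmf_def[symmetric] index_pmf_def[symmetric]
  by (simp add: pair_pmf_def map_pmf_def bind_assoc_pmf bind_return_pmf assemble1_def
      bind_commute_pmf[of _ "pU1 P"])

lemma sample_pmf_split2: "sample_pmf L1 L2 P = map_pmf assemble2 (pair_pmf (part2 L2 P) (rest2 L1 L2 P))"
proof -
  have "sample_pmf L1 L2 P = pU2 P \<bind> (\<lambda>u2. files_pmf L2 (len2 P) \<bind> (\<lambda>f2. files_pmf L1 (len1 P) \<bind>
     (\<lambda>f1. pU0 P \<bind> (\<lambda>u0. pU1 P \<bind> (\<lambda>u1. index_pmf L1 \<bind> (\<lambda>z1. index_pmf L2 \<bind>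
     (\<lambda>z2. return_pmf \<lparr>sF1 = f1, sF2 = f2, sU0 = u0, sU1 = u1, sU2 = u2, sZ1 = z1, sZ2 = z2\<rparr>)))))))"
    unfolding sample_pmf_def files_pmf_def[symmetric] index_pmf_def[symmetric]
    by (simp add: bind_commute_pmf[of _ "pU2 P"] bind_commute_pmf[of "files_pmf L1 (len1 P)" "files_pmf L2 (len2 P)"])
  also have "\<dots> = map_pmf assemble2 (pair_pmf (part2 L2 P) (rest2 L1 L2 P))"
    unfolding part2_def rest2_def
    by (simp add: pair_pmf_def map_pmf_def bind_assoc_pmf bind_return_pmf assemble2_def
        bind_commute_pmf[of _ "pU2 P"])
  finally show ?thesis .
qed

lemma finite_parts:
  assumes "valid_protocol P" "1 \<le> L1" "1 \<le> L2"
  shows "finite (set_pmf (part1 L1 P))" "finite (set_pmf (rest1 L1 L2 P))"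
    "finite (set_pmf (part2 L2 P))" "finite (set_pmf (rest2 L1 L2 P))"
  using assms by (auto simp: part1_def rest1_def part2_def rest2_def set_pair_pmf file_set_finite
      valid_protocol_def)

lemma finite_set_sample_pmf:
  assumes "valid_protocol P" "1 \<le> L1" "1 \<le> L2"
  shows "finite (set_pmf (sample_pmf L1 L2 P))"
  unfolding sample_pmf_split1 using finite_parts[OF assms] by (simp add: set_pair_pmf)

lemma files_in_file_set:
  assumes "1 \<le> L1" "1 \<le> L2" and w: "w \<in> set_pmf (sample_pmf L1 L2 P)"
  shows "sF1 w \<in> file_set L1 (len1 P)" "sF2 w \<in> file_set L2 (len2 P)"
  using w assms unfolding sample_pmf_split1 by (auto simp: part1_def rest1_def set_pair_pmf assemble1_def)

lemma prob_sample_split1: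
  assumes "valid_protocol P" "1 \<le> L1" "1 \<le> L2"
  shows "measure_pmf.prob (sample_pmf L1 L2 P) {w. \<Phi> (sF1 w, sU1 w) \<and> \<Psi> (sF2 w, sU0 w, sU2 w, sZ1 w, sZ2 w)}
    = measure_pmf.prob (part1 L1 P) {a. \<Phi> a} * measure_pmf.prob (rest1 L1 L2 P) {b. \<Psi> b}"
proof -
  have "assemble1 -` {w. \<Phi> (sF1 w, sU1 w) \<and> \<Psi> (sF2 w, sU0 w, sU2 w, sZ1 w, sZ2 w)} = {a. \<Phi> a} \<times> {b. \<Psi> b}"
    by (auto simp: assemble1_def split: prod.splits)
  then show ?thesis unfolding sample_pmf_split1 measure_map_pmf
    using measure_pair_pmf_Times[OF finite_parts(1,2)[OF assms]] by simp
qed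

lemma prob_sample_split2:
  assumes "valid_protocol P" "1 \<le> L1" "1 \<le> L2"
  shows "measure_pmf.prob (sample_pmf L1 L2 P) {w. \<Phi> (sF2 w, sU2 w) \<and> \<Psi> (sF1 w, sU0 w, sU1 w, sZ1 w, sZ2 w)}
    = measure_pmf.prob (part2 L2 P) {a. \<Phi> a} * measure_pmf.prob (rest2 L1 L2 P) {b. \<Psi> b}"
proof -
  have "assemble2 -` {w. \<Phi> (sF2 w, sU2 w) \<and> \<Psi> (sF1 w, sU0 w, sU1 w, sZ1 w, sZ2 w)} = {a. \<Phi> a} \<times> {b. \<Psi> b}"
    by (auto simp: assemble2_def split: prod.splits)
  then show ?thesis unfolding sample_pmf_split2 measure_map_pmf
    using measure_pair_pmf_Times[OF finite_parts(3,4)[OF assms]] by simp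
qed

lemma map_pmf_sZ1_sample_pmf: "map_pmf sZ1 (sample_pmf L1 L2 P) = pmf_of_set {1..L1}"
  unfolding sample_pmf_def by (simp add: map_bind_pmf bind_pmf_const bind_return_pmf')

lemma map_pmf_sZ2_sample_pmf: "map_pmf sZ2 (sample_pmf L1 L2 P) = pmf_of_set {1..L2}"
  unfolding sample_pmf_def by (simp add: map_bind_pmf bind_pmf_const bind_return_pmf')

lemma view1_eq_iff:
  "(Xn1 n P w, Aall n P w) = (x1, a1, a2) \<longleftrightarrow>
   (map (enc1 P (sF1 w) (sU1 w)) [0..<n] = x1 \<and> length a1 = rounds P
      \<and> server_consistent (\<lambda>j. srv1 P j (sF1 w) (sU1 w)) a1) \<and>
   (client_consistent (\<lambda>j. cli1 P j (sZ1 w) (sU0 w) (adder_output x1 (map (enc2 P (sF2 w) (sU2 w)) [0..<n]))) a1 \<and>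
    run_rounds (rounds P) (\<lambda>j. srv2 P j (sF2 w) (sU2 w))
      (\<lambda>j. cli2 P j (sZ2 w) (sU0 w) (adder_output x1 (map (enc2 P (sF2 w) (sU2 w)) [0..<n]))) = a2)"
proof (cases "Xn1 n P w = x1")
  case True
  then have "Yn n P w = adder_output x1 (map (enc2 P (sF2 w) (sU2 w)) [0..<n])"
    by (simp add: Yn_eq_adder_output Xn2_def)
  with True show ?thesis
    by (auto simp: Aall_def A1_def A2_def run_rounds_eq_iff Xn1_def)
qed (auto simp: Xn1_def)

lemma view2_eq_iff:
  "(Xn2 n P w, Aall n P w) = (x2, a1, a2) \<longleftrightarrow>
   (map (enc2 P (sF2 w) (sU2 w)) [0..<n] = x2 \<and> length a2 = rounds P
      \<and> server_consistent (\<lambda>j. srv2 P j (sF2 w) (sU2 w)) a2) \<and>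
   (run_rounds (rounds P) (\<lambda>j. srv1 P j (sF1 w) (sU1 w))
      (\<lambda>j. cli1 P j (sZ1 w) (sU0 w) (adder_output (map (enc1 P (sF1 w) (sU1 w)) [0..<n]) x2)) = a1 \<and>
    client_consistent (\<lambda>j. cli2 P j (sZ2 w) (sU0 w) (adder_output (map (enc1 P (sF1 w) (sU1 w)) [0..<n]) x2)) a2)"
proof (cases "Xn2 n P w = x2")
  case True
  then have "Yn n P w = adder_output (map (enc1 P (sF1 w) (sU1 w)) [0..<n]) x2"
    by (simp add: Yn_eq_adder_output Xn1_def)
  with True show ?thesis
    by (auto simp: Aall_def A1_def A2_def run_rounds_eq_iff Xn2_def)
qed (simp_all add: Xn2_def)

lemma markov_chain_view1:
  assumes "valid_protocol P" "1 \<le> L1" "1 \<le> L2"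
  shows "markov_chain (sample_pmf L1 L2 P) sF1 (\<lambda>w. (Xn1 n P w, Aall n P w)) (\<lambda>w. (Xn2 n P w, sU0 w, sZ1 w))"
proof (rule markov_chain_if_rectangles[where sa = "\<lambda>w. (sF1 w, sU1 w)"
      and sb = "\<lambda>w. (sF2 w, sU0 w, sU2 w, sZ1 w, sZ2 w)" and f = fst
      and r = "\<lambda>(f2, u0, u2, z1, z2). (map (enc2 P f2 u2) [0..<n], u0, z1)"])
  show "measure_pmf.prob (sample_pmf L1 L2 P) {w. \<Phi> (sF1 w, sU1 w) \<and> \<Psi> (sF2 w, sU0 w, sU2 w, sZ1 w, sZ2 w)}
    = measure_pmf.prob (part1 L1 P) {a. \<Phi> a} * measure_pmf.prob (rest1 L1 L2 P) {b. \<Psi> b}" for \<Phi> \<Psi>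
    by (rule prob_sample_split1[OF assms])
  show "\<exists>\<Phi>0 \<Psi>0. \<forall>w. (Xn1 n P w, Aall n P w) = v \<longleftrightarrow> \<Phi>0 (sF1 w, sU1 w) \<and> \<Psi>0 (sF2 w, sU0 w, sU2 w, sZ1 w, sZ2 w)"
    for v
  proof -
    obtain x1 a1 a2 where v: "v = (x1, a1, a2)" by (cases v) auto
    show ?thesis unfolding v view1_eq_iff
      by (rule exI[of _ "\<lambda>(f1, u1). map (enc1 P f1 u1) [0..<n] = x1 \<and> length a1 = rounds P
            \<and> server_consistent (\<lambda>j. srv1 P j f1 u1) a1"],
          rule exI[of _ "\<lambda>(f2, u0, u2, z1, z2).
            client_consistent (\<lambda>j. cli1 P j z1 u0 (adder_output x1 (map (enc2 P f2 u2) [0..<n]))) a1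
            \<and> run_rounds (rounds P) (\<lambda>j. srv2 P j f2 u2)
                (\<lambda>j. cli2 P j z2 u0 (adder_output x1 (map (enc2 P f2 u2) [0..<n]))) = a2"]) simp
  qed
qed (simp_all add: Xn2_def)

lemma markov_chain_view2:
  assumes "valid_protocol P" "1 \<le> L1" "1 \<le> L2"
  shows "markov_chain (sample_pmf L1 L2 P) sF2 (\<lambda>w. (Xn2 n P w, Aall n P w)) (\<lambda>w. (Xn1 n P w, sU0 w, sZ2 w))"
proof (rule markov_chain_if_rectangles[where sa = "\<lambda>w. (sF2 w, sU2 w)"
      and sb = "\<lambda>w. (sF1 w, sU0 w, sU1 w, sZ1 w, sZ2 w)" and f = fst
      and r = "\<lambda>(f1, u0, u1, z1, z2). (map (enc1 P f1 u1) [0..<n], u0, z2)"])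
  show "measure_pmf.prob (sample_pmf L1 L2 P) {w. \<Phi> (sF2 w, sU2 w) \<and> \<Psi> (sF1 w, sU0 w, sU1 w, sZ1 w, sZ2 w)}
    = measure_pmf.prob (part2 L2 P) {a. \<Phi> a} * measure_pmf.prob (rest2 L1 L2 P) {b. \<Psi> b}" for \<Phi> \<Psi>
    by (rule prob_sample_split2[OF assms])
  show "\<exists>\<Phi>0 \<Psi>0. \<forall>w. (Xn2 n P w, Aall n P w) = v \<longleftrightarrow> \<Phi>0 (sF2 w, sU2 w) \<and> \<Psi>0 (sF1 w, sU0 w, sU1 w, sZ1 w, sZ2 w)"
    for v
  proof -
    obtain x2 a1 a2 where v: "v = (x2, a1, a2)" by (cases v) auto
    show ?thesis unfolding v view2_eq_iff
      by (rule exI[of _ "\<lambda>(f2, u2). map (enc2 P f2 u2) [0..<n] = x2 \<and> length a2 = rounds P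
            \<and> server_consistent (\<lambda>j. srv2 P j f2 u2) a2"],
          rule exI[of _ "\<lambda>(f1, u0, u1, z1, z2).
            run_rounds (rounds P) (\<lambda>j. srv1 P j f1 u1)
                (\<lambda>j. cli1 P j z1 u0 (adder_output (map (enc1 P f1 u1) [0..<n]) x2)) = a1
            \<and> client_consistent (\<lambda>j. cli2 P j z2 u0 (adder_output (map (enc1 P f1 u1) [0..<n]) x2)) a2"]) simp
  qed
qed (simp_all add: Xn1_def)

definition decoding_error :: "nat \<Rightarrow> nat \<Rightarrow> (nat \<Rightarrow> spir_protocol) \<Rightarrow> nat \<Rightarrow> real" where
  "decoding_error L1 L2 P n = measure_pmf.prob (sample_pmf L1 L2 (P n))
     {w. (dec1 (P n) (Yn n (P n) w) (sU0 w) (A1 n (P n) w) (sZ1 w),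
          dec2 (P n) (Yn n (P n) w) (sU0 w) (A2 n (P n) w) (sZ2 w))
         \<noteq> (sF1 w (sZ1 w), sF2 w (sZ2 w))}"

lemma achievesD:
  assumes "achieves L1 L2 R1 R2 P"
  shows "valid_protocol (P n)" "len1 (P n) = nat \<lfloor>real n * R1\<rfloor>" "len2 (P n) = nat \<lfloor>real n * R2\<rfloor>"
    and "decoding_error L1 L2 P \<longlonglongrightarrow> 0"
    and "(\<lambda>n. mut_inf (sample_pmf L1 L2 (P n))
        (\<lambda>w. (all_files L1 (sF1 w), Xn1 n (P n) w, sU1 w, Aall n (P n) w))
        (\<lambda>w. (sZ1 w, sZ2 w))) \<longlonglongrightarrow> 0"
    and "(\<lambda>n. mut_inf (sample_pmf L1 L2 (P n))
        (\<lambda>w. (all_files L2 (sF2 w), Xn2 n (P n) w, sU2 w, Aall n (P n) w))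
        (\<lambda>w. (sZ1 w, sZ2 w))) \<longlonglongrightarrow> 0"
  using assms unfolding achieves_def decoding_error_def by blast+

lemma real_nat_floor_mult_le: "real (nat \<lfloor>real n * R\<rfloor>) \<le> real n * \<bar>R\<bar>"
proof (cases "\<lfloor>real n * R\<rfloor> \<le> 0")
  case False
  then have "real (nat \<lfloor>real n * R\<rfloor>) \<le> real n * R" by simp
  also have "\<dots> \<le> real n * \<bar>R\<bar>" by (simp add: mult_left_mono)
  finally show ?thesis .
qed simp

lemma server_view_1:
  assumes "1 \<le> L1" "1 \<le> L2" "achieves L1 L2 R1 R2 P"
  shows "server_view (\<lambda>n. sample_pmf L1 L2 (P n)) sF1 L1 (\<lambda>n. len1 (P n)) (\<lambda>n. Xn1 n (P n))
    (\<lambda>n. Aall n (P n)) sU1 (\<lambda>w. (sZ1 w, sZ2 w)) fst sZ1 (\<lambda>n w. (Xn2 n (P n) w, sU0 w, sZ1 w))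
    (\<lambda>(x, u, z). z) (\<lambda>n (x1, a1, a2) (x2, u0, z1). dec1 (P n) (adder_output x1 x2) u0 a1 z1)
    (decoding_error L1 L2 P) \<bar>R1\<bar>"
  using assms(1,2) achievesD[OF assms(3)]
  apply unfold_locales
  subgoal by (rule finite_set_sample_pmf)
  subgoal by simp
  subgoal for n w l by (rule length_file_set[OF files_in_file_set(1)])
  subgoal for n by (simp add: real_nat_floor_mult_le)
  subgoal by simp
  subgoal by simp
  subgoal for n l by (simp add: prob_eq_inverse_card[OF map_pmf_sZ1_sample_pmf])
  subgoal for n by (rule markov_chain_view1)
  subgoal for n unfolding decoding_error_def
    by (rule measure_pmf.finite_measure_mono) (auto simp: Yn_eq_adder_output Aall_def)
  by simp_all

lemma server_view_2:
  assumes "1 \<le> L1" "1 \<le> L2" "achieves L1 L2 R1 R2 P"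
  shows "server_view (\<lambda>n. sample_pmf L1 L2 (P n)) sF2 L2 (\<lambda>n. len2 (P n)) (\<lambda>n. Xn2 n (P n))
    (\<lambda>n. Aall n (P n)) sU2 (\<lambda>w. (sZ1 w, sZ2 w)) snd sZ2 (\<lambda>n w. (Xn1 n (P n) w, sU0 w, sZ2 w))
    (\<lambda>(x, u, z). z) (\<lambda>n (x2, a1, a2) (x1, u0, z2). dec2 (P n) (adder_output x1 x2) u0 a2 z2)
    (decoding_error L1 L2 P) \<bar>R2\<bar>"
  using assms(1,2) achievesD[OF assms(3)]
  apply unfold_locales
  subgoal by (rule finite_set_sample_pmf)
  subgoal by simp
  subgoal for n w l by (rule length_file_set[OF files_in_file_set(2)])
  subgoal for n by (simp add: real_nat_floor_mult_le)
  subgoal by simp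
  subgoal by simp
  subgoal for n l by (simp add: prob_eq_inverse_card[OF map_pmf_sZ2_sample_pmf])
  subgoal for n by (rule markov_chain_view2)
  subgoal for n unfolding decoding_error_def
    by (rule measure_pmf.finite_measure_mono) (auto simp: Yn_eq_adder_output Aall_def)
  by simp_all

theorem lemma6:
  fixes L1 L2 :: nat and R1 R2 :: real and P :: "nat \<Rightarrow> spir_protocol"
  assumes "L1 \<ge> 1" and "L2 \<ge> 1"
    and "achieves L1 L2 R1 R2 P"
  shows "(\<lambda>n. cond_ent (sample_pmf L1 L2 (P n))
            (\<lambda>w. other_files L1 (sF1 w) (sZ1 w))
            (\<lambda>w. (Xn1 n (P n) w, Aall n (P n) w, sZ1 w, sZ2 w)) / real n) \<longlonglongrightarrow> 0
       \<and> (\<lambda>n. cond_ent (sample_pmf L1 L2 (P n))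
            (\<lambda>w. other_files L2 (sF2 w) (sZ2 w))
            (\<lambda>w. (Xn2 n (P n) w, Aall n (P n) w, sZ1 w, sZ2 w)) / real n) \<longlonglongrightarrow> 0"
  using server_view.cond_ent_other_files_sublinear[OF server_view_1[OF assms]]
    server_view.cond_ent_other_files_sublinear[OF server_view_2[OF assms]]
  by simp

end
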